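(* Let $m>n$ be positive integers. (a) There is a functor $F:\mathfrak T_{iso}\to\mathfrak S([X\times\mathbb Z])$ such that for $\alpha\in\Delta_{iso}$, $F(\alpha)=\{[\lambda,j]: j\in\mathbb Z,\ \lambda\in X_{\nu^j\alpha}\}$ and $F(\rho_\alpha)[\lambda,j]=[t_{\nu^j\alpha}(\lambda),j]$ for $\lambda\in X_{\nu^j\alpha}$. (b) There is a functor $B:\mathfrak T_{iso}\to\mathfrak S([\mathcal B^\circ\times\mathbb Z])$ such that for $\alpha\in\Delta_{iso}$, $B(\alpha)=\{[\mathfrak b,j]: j\in\mathbb Z,\ \mathfrak b\in\mathcal B^\circ(\nu^j\alpha)\}$ and $B(\rho_\alpha)[\mathfrak b,j]=[r_{\nu^j\alpha}(\mathfrak b),j]$ for $\mathfrak b\in\mathcal B^\circ(\nu^j\alpha)$. (c) The map $[\zeta(\sigma),k]\mapsto[\mathfrak b^\circ(\sigma),k]$ is a well-defined bijection $[X\times\mathbb Z]\to[\mathcal B^\circ\times\mathbb Z]$ which carries $F(\alpha)$ onto $B(\alpha)$ and intertwines $F(\rho_\alpha)$ with $B(\rho_\alpha)$ for every $\alpha\in\Delta_{iso}$.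
   Context: Roots: $\Delta_1^+=\{\epsilon_i-\delta_j\}$, $\Delta_{iso}=\pm\Delta_1^+$; $\nu(\pm(\epsilon_i-\delta_j))=\pm(\epsilon_{i+1}-\delta_j)$ with $\epsilon$-indices mod $n$ in $\{1,\dots,n\}$. $\mathfrak T_{iso}$: groupoid with objects $\Delta_{iso}$ and non-identity morphisms $\rho_\alpha:\alpha\to-\alpha$; $\mathfrak S(V)$: groupoid of subsets of $V$ and bijections between them. Young diagrams: $X$ = partitions $\lambda=(\lambda_1\ge\dots\ge\lambda_n\ge0)$, $\lambda_1\le m$, drawn in an $n\times m$ rectangle with rows $\epsilon_1,\dots,\epsilon_n$ top to bottom and columns $\delta_1,\dots,\delta_m$; $\lambda$ consists of boxes $\epsilon_i-\delta_j$ with $j\le\lambda_{n+1-i}$. For $\alpha\in\Delta_1^+$, $X_\alpha$ (resp. $X_{-\alpha}$) is the set of $\lambda$ for which box $\alpha$ is an outer (resp. inner) corner, $t_\alpha$ adds and $t_{-\alpha}$ removes that box. For $\lambda_1=m$, $\overline\lambda=(\lambda_2,\dots,\lambda_n,0)$. $[X\times\mathbb Z]$ is the set of classes of the smallest equivalence relation with $(\lambda,k)\sim(\overline\lambda,k+1)$ whenever $\lambda_1=m$. Shuffles and Borels: $I=\{1,\dots,n,1',\dots,m'\}$, $\epsilon_{j'}:=\delta_j$; a shuffle is a permutation $\sigma$ of $I$ whose one-line notation $(\sigma(1),\dots,\sigma(n),\sigma(1'),\dots,\sigma(m'))$ has $1,\dots,n$ and $1',\dots,m'$ as increasing subsequences.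 $\mathfrak b^\circ(\sigma)$ is the Borel subalgebra of $\mathfrak{gl}(n|m)$ containing the diagonal matrices whose simple roots are $\epsilon_{u}-\epsilon_{v}$ for consecutive entries $u,v$ of the one-line notation; $\mathcal B^\circ=\{\mathfrak b^\circ(\sigma)\}$. $\zeta(\sigma)\in X$: the boxes below the lattice path from top-left to bottom-right whose $k$-th step is down if the $k$-th entry of $\sigma$ is unprimed and right otherwise ($\zeta$ is a bijection). For $\alpha=\epsilon_i-\delta_j$, $\mathcal B^\circ(\alpha)$ (resp. $\mathcal B^\circ(-\alpha)$) is the set of $\mathfrak b^\circ(\sigma)$ in which $i$ immediately precedes (resp. follows) $j'$, and $r_{\pm\alpha}(\mathfrak b^\circ(\sigma))=\mathfrak b^\circ((i,j')\sigma)$ (interchange $i,j'$; this is the odd reflection). For $\sigma$ with last entry $n$, $\overline\sigma$ has one-line notation $1$ followed by $\nu^{-1}$ applied to the first $m+n-1$ entries of $\sigma$, where $\nu^{-1}(k)=k+1$ ($k<n$), $\nu^{-1}(n)=1$, $\nu^{-1}$ fixes primed entries. $[\mathcal B^\circ\times\mathbb Z]$ is the set of classes of the smallest equivalence relation with $(\mathfrak b^\circ(\sigma),k)\sim(\mathfrak b^\circ(\overline\sigma),k+1)$ whenever $\sigma$ has last entry $n$. *)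

theory Defs
  imports Complex_Main
begin

text \<open>A root is encoded as (s,i,j) with s = True for eps_i - delta_j and
  s = False for -(eps_i - delta_j).\<close>

type_synonym root = "bool \<times> nat \<times> nat"

definition Delta_iso :: "nat \<Rightarrow> nat \<Rightarrow> root set" where
  "Delta_iso n m = {(s,i,j). 1 \<le> i \<and> i \<le> n \<and> 1 \<le> j \<and> j \<le> m}"

fun neg_root :: "root \<Rightarrow> root" where
  "neg_root (s,i,j) = (\<not> s, i, j)"

fun nu :: "nat \<Rightarrow> root \<Rightarrow> root" where
  "nu n (s,i,j) = (s, if i < n then i + 1 else 1, j)"

fun nu_inv :: "nat \<Rightarrow> root \<Rightarrow> root" where
  "nu_inv n (s,i,j) = (s, if 1 < i then i - 1 else n, j)"

definition nu_pow :: "nat \<Rightarrow> int \<Rightarrow> root \<Rightarrow> root" where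
  "nu_pow n k = (if 0 \<le> k then nu n ^^ nat k else nu_inv n ^^ nat (- k))"

text \<open>T_iso has objects Delta_iso, identities, and rho_alpha : alpha -> -alpha
  (so rho_(-alpha) o rho_alpha = id_alpha). A functor to S(V) is given by
  subsets Fo alpha of V and bijections Fm alpha : Fo alpha -> Fo (-alpha)
  (the images of rho_alpha), compatible with the composition law.\<close>

definition Tiso_functor ::
  "root set \<Rightarrow> 'v set \<Rightarrow> (root \<Rightarrow> 'v set) \<Rightarrow> (root \<Rightarrow> 'v \<Rightarrow> 'v) \<Rightarrow> bool" where
  "Tiso_functor D V Fo Fm \<longleftrightarrow>
     (\<forall>\<alpha>\<in>D. Fo \<alpha> \<subseteq> V \<and> bij_betw (Fm \<alpha>) (Fo \<alpha>) (Fo (neg_root \<alpha>))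
        \<and> (\<forall>c\<in>Fo \<alpha>. Fm (neg_root \<alpha>) (Fm \<alpha> c) = c))"

definition eqcl :: "'a set \<Rightarrow> ('a \<times> 'a) set \<Rightarrow> ('a \<times> 'a) set" where
  "eqcl A R = Id_on A \<union> (R \<union> R\<inverse>)\<^sup>+"

text \<open>A partition lambda = (lambda_1 >= ... >= lambda_n) is the list
  [lambda_1, ..., lambda_n]; lambda_k = lam ! (k - 1).\<close>

definition Xset :: "nat \<Rightarrow> nat \<Rightarrow> nat list set" where
  "Xset n m = {lam. length lam = n \<and> sorted_wrt (\<ge>) lam \<and> (\<forall>x\<in>set lam. x \<le> m)}"

text \<open>Box eps_i - delta_j is (i,j); it lies in lambda iff j \<le> lambda_(n+1-i).\<close>
definition boxes :: "nat \<Rightarrow> nat list \<Rightarrow> (nat \<times> nat) set" where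
  "boxes n lam = {(i,j). 1 \<le> i \<and> i \<le> n \<and> 1 \<le> j \<and> j \<le> lam ! (n - i)}"

fun Xc :: "nat \<Rightarrow> nat \<Rightarrow> root \<Rightarrow> nat list set" where
  "Xc n m (True,i,j) = {lam \<in> Xset n m. (i,j) \<notin> boxes n lam \<and>
       (\<exists>\<mu>\<in>Xset n m. boxes n \<mu> = insert (i,j) (boxes n lam))}"
| "Xc n m (False,i,j) = {lam \<in> Xset n m. (i,j) \<in> boxes n lam \<and>
       (\<exists>\<mu>\<in>Xset n m. boxes n \<mu> = boxes n lam - {(i,j)})}"

fun t_op :: "nat \<Rightarrow> root \<Rightarrow> nat list \<Rightarrow> nat list" where
  "t_op n (True,i,j) lam = lam[n - i := lam ! (n - i) + 1]"
| "t_op n (False,i,j) lam = lam[n - i := lam ! (n - i) - 1]"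

definition lam_bar :: "nat list \<Rightarrow> nat list" where
  "lam_bar lam = tl lam @ [0]"

definition XZ_rel :: "nat \<Rightarrow> nat \<Rightarrow> ((nat list \<times> int) \<times> (nat list \<times> int)) set" where
  "XZ_rel n m = eqcl (Xset n m \<times> UNIV)
     {((lam,k),(lam_bar lam, k + 1)) | lam k. lam \<in> Xset n m \<and> lam ! 0 = m}"

definition XZ :: "nat \<Rightarrow> nat \<Rightarrow> (nat list \<times> int) set set" where
  "XZ n m = (Xset n m \<times> UNIV) // XZ_rel n m"

definition clsX :: "nat \<Rightarrow> nat \<Rightarrow> nat list \<times> int \<Rightarrow> (nat list \<times> int) set" where
  "clsX n m x = XZ_rel n m `` {x}"

definition Fobj :: "nat \<Rightarrow> nat \<Rightarrow> root \<Rightarrow> (nat list \<times> int) set set" where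
  "Fobj n m \<alpha> = {clsX n m (lam, j) | lam j. lam \<in> Xc n m (nu_pow n j \<alpha>)}"

text \<open>I = {1..n} \<union> {1'..m'} is encoded by Inl k (= k) and Inr j (= j').
  A shuffle is represented by its one-line notation (a list).\<close>

type_synonym idx = "nat + nat"

definition Iset :: "nat \<Rightarrow> nat \<Rightarrow> idx set" where
  "Iset n m = Inl ` {1..n} \<union> Inr ` {1..m}"

definition shuffle_set :: "nat \<Rightarrow> nat \<Rightarrow> idx list set" where
  "shuffle_set n m = {\<sigma>. distinct \<sigma> \<and> set \<sigma> = Iset n m \<and>
      filter isl \<sigma> = map Inl [1..<n+1] \<and>
      filter (\<lambda>x. \<not> isl x) \<sigma> = map Inr [1..<m+1]}"

definition precedes :: "idx list \<Rightarrow> idx \<Rightarrow> idx \<Rightarrow> bool" where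
  "precedes \<sigma> u v \<longleftrightarrow> (\<exists>k l. k < l \<and> l < length \<sigma> \<and> \<sigma> ! k = u \<and> \<sigma> ! l = v)"

text \<open>gl(n|m) realised as complex matrices indexed by I x I. The Borel
  subalgebra b(sigma): diagonal matrices plus the root spaces E_uv of the
  positive roots eps_u - eps_v, i.e. u before v in the one-line notation
  (these are generated by the simple roots of consecutive entries).\<close>

type_synonym mat = "idx \<Rightarrow> idx \<Rightarrow> complex"

definition borel :: "idx list \<Rightarrow> mat set" where
  "borel \<sigma> = {A. \<forall>u v. A u v \<noteq> 0 \<longrightarrow> u \<in> set \<sigma> \<and> v \<in> set \<sigma> \<and> (u = v \<or> precedes \<sigma> u v)}"

definition Bset :: "nat \<Rightarrow> nat \<Rightarrow> mat set set" where
  "Bset n m = borel ` shuffle_set n m"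

definition imm_prec :: "idx list \<Rightarrow> idx \<Rightarrow> idx \<Rightarrow> bool" where
  "imm_prec \<sigma> u v \<longleftrightarrow> (\<exists>k. k + 1 < length \<sigma> \<and> \<sigma> ! k = u \<and> \<sigma> ! (k + 1) = v)"

fun Bc :: "nat \<Rightarrow> nat \<Rightarrow> root \<Rightarrow> mat set set" where
  "Bc n m (True,i,j) = {borel \<sigma> | \<sigma>. \<sigma> \<in> shuffle_set n m \<and> imm_prec \<sigma> (Inl i) (Inr j)}"
| "Bc n m (False,i,j) = {borel \<sigma> | \<sigma>. \<sigma> \<in> shuffle_set n m \<and> imm_prec \<sigma> (Inr j) (Inl i)}"

definition swap_ij :: "nat \<Rightarrow> nat \<Rightarrow> idx list \<Rightarrow> idx list" where
  "swap_ij i j \<sigma> = map (\<lambda>x. if x = Inl i then Inr j else if x = Inr j then Inl i else x) \<sigma>"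

fun r_op :: "nat \<Rightarrow> nat \<Rightarrow> root \<Rightarrow> mat set \<Rightarrow> mat set" where
  "r_op n m (s,i,j) b =
     (THE b'. \<exists>\<sigma>\<in>shuffle_set n m. b = borel \<sigma> \<and> b' = borel (swap_ij i j \<sigma>))"

fun nu_inv_idx :: "nat \<Rightarrow> idx \<Rightarrow> idx" where
  "nu_inv_idx n (Inl k) = Inl (if k < n then k + 1 else 1)"
| "nu_inv_idx n (Inr j) = Inr j"

definition sigma_bar :: "nat \<Rightarrow> idx list \<Rightarrow> idx list" where
  "sigma_bar n \<sigma> = Inl 1 # map (nu_inv_idx n) (butlast \<sigma>)"

definition BZ_rel :: "nat \<Rightarrow> nat \<Rightarrow> ((mat set \<times> int) \<times> (mat set \<times> int)) set" where
  "BZ_rel n m = eqcl (Bset n m \<times> UNIV)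
     {((borel \<sigma>, k), (borel (sigma_bar n \<sigma>), k + 1)) | \<sigma> k.
        \<sigma> \<in> shuffle_set n m \<and> last \<sigma> = Inl n}"

definition BZ :: "nat \<Rightarrow> nat \<Rightarrow> (mat set \<times> int) set set" where
  "BZ n m = (Bset n m \<times> UNIV) // BZ_rel n m"

definition clsB :: "nat \<Rightarrow> nat \<Rightarrow> mat set \<times> int \<Rightarrow> (mat set \<times> int) set" where
  "clsB n m x = BZ_rel n m `` {x}"

definition Bobj :: "nat \<Rightarrow> nat \<Rightarrow> root \<Rightarrow> (mat set \<times> int) set set" where
  "Bobj n m \<alpha> = {clsB n m (b, j) | b j. b \<in> Bc n m (nu_pow n j \<alpha>)}"

text \<open>Row i of the rectangle contains, below the lattice path, the boxes in
  columns 1..c_i where c_i = number of primed entries before i; so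
  lambda_(n+1-i) = c_i, i.e. lambda_k = c_(n+1-k).\<close>
definition zeta :: "nat \<Rightarrow> idx list \<Rightarrow> nat list" where
  "zeta n \<sigma> = map (\<lambda>k. length (filter (\<lambda>x. \<not> isl x) (takeWhile (\<lambda>x. x \<noteq> Inl (n + 1 - k)) \<sigma>)))
                   [1..<n+1]"

end

theory Submission
  imports Defs
begin

text \<open>Every class of [X \<times> Z] contains a unique normal form, obtained from any member by applying
  (\<lambda>, k) \<mapsto> (\<lambda>bar, k + 1) as long as \<lambda>_1 = m: the number of leading parts equal to m drops at each
  step, so this stops after at most n steps, and two pairs are equivalent iff their normal forms
  agree. Adding or removing a box commutes with this step up to the rotation \<nu> of the row index;
  at the only place where it does not (the row index wrapping around from n to 1) the box is not a
  corner. Hence t_(\<nu>^j \<alpha>) descends to the classes, which gives (a).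

  The map \<zeta> is a bijection from shuffles to diagrams under which "i immediately precedes (follows)
  j'" means "the box \<epsilon>_i - \<delta>_j is an outer (inner) corner", the odd reflection becomes adding
  (removing) that box, and \<sigma> \<mapsto> \<sigma>bar becomes \<lambda> \<mapsto> \<lambda>bar. So the bijection b\<degree> \<circ> \<zeta>^-1 carries the
  relation, the subsets and the bijections of (a) to those of (b), which proves (b) and (c).\<close>

section \<open>Equivalence closures and groupoid functors\<close>

lemma eqcl_eq_kernel:
  assumes R: "R \<subseteq> A \<times> A" and to_N: "\<And>x. x \<in> A \<Longrightarrow> (x, N x) \<in> (R \<union> R\<inverse>)\<^sup>*"
    and N_R: "\<And>x y. (x, y) \<in> R \<Longrightarrow> N x = N y"
  shows "eqcl A R = {(x, y). x \<in> A \<and> y \<in> A \<and> N x = N y}"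
proof
  have "a \<in> A \<and> b \<in> A \<and> N a = N b" if "(a, b) \<in> (R \<union> R\<inverse>)\<^sup>+" for a b
    using that by (induction rule: trancl_induct) (use R N_R in auto)
  then show "eqcl A R \<subseteq> {(x, y). x \<in> A \<and> y \<in> A \<and> N x = N y}"
    unfolding eqcl_def by auto
next
  show "{(x, y). x \<in> A \<and> y \<in> A \<and> N x = N y} \<subseteq> eqcl A R"
  proof clarify
    fix x y assume xy: "x \<in> A" "y \<in> A" "N x = N y"
    let ?S = "R \<union> R\<inverse>"
    have "(N y, y) \<in> (?S\<inverse>)\<^sup>*" using to_N[OF xy(2)] by (simp add: rtrancl_converse)
    moreover have "?S\<inverse> = ?S" by auto
    ultimately have "(x, y) \<in> ?S\<^sup>*" using to_N[OF xy(1)] xy(3) by (metis rtrancl_trans)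
    then show "(x, y) \<in> eqcl A R" unfolding eqcl_def using xy
      by (metis Id_onI UnI1 UnI2 rtrancl_eq_or_trancl)
  qed
qed

lemma trancl_map_prod_image:
  assumes inj: "inj_on f A" and Q: "Q \<subseteq> A \<times> A"
  shows "(map_prod f f ` Q)\<^sup>+ = map_prod f f ` (Q\<^sup>+)"
proof
  have "(f x, f y) \<in> (map_prod f f ` Q)\<^sup>+" if "(x, y) \<in> Q\<^sup>+" for x y
    using that
  proof (induction rule: trancl_induct)
    case (base y)
    then show ?case by (metis map_prod_simp rev_image_eqI r_into_trancl)
  next
    case (step y z)
    then show ?case by (metis map_prod_simp rev_image_eqI trancl_into_trancl)
  qed
  then show "map_prod f f ` (Q\<^sup>+) \<subseteq> (map_prod f f ` Q)\<^sup>+" by auto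
next
  have QA: "Q\<^sup>+ \<subseteq> A \<times> A" using trancl_subset_Sigma[OF Q] .
  show "(map_prod f f ` Q)\<^sup>+ \<subseteq> map_prod f f ` (Q\<^sup>+)"
  proof clarify
    fix a b assume "(a, b) \<in> (map_prod f f ` Q)\<^sup>+"
    then show "(a, b) \<in> map_prod f f ` (Q\<^sup>+)"
    proof (induction rule: trancl_induct)
      case (base y) then show ?case by auto
    next
      case (step y z)
      obtain x y1 where xy: "a = f x" "y = f y1" "(x, y1) \<in> Q\<^sup>+" using step(3) by auto
      obtain y2 z1 where yz: "y = f y2" "z = f z1" "(y2, z1) \<in> Q" using step(2) by auto
      have "y1 = y2" using inj xy yz QA Q by (auto dest: inj_onD)
      then have "(x, z1) \<in> Q\<^sup>+" using xy(3) yz(3) by (simp add: trancl_into_trancl)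
      then show ?case using xy yz by (metis map_prod_simp rev_image_eqI)
    qed
  qed
qed

lemma eqcl_map_prod_image:
  assumes inj: "inj_on f A" and R: "R \<subseteq> A \<times> A"
  shows "eqcl (f ` A) (map_prod f f ` R) = map_prod f f ` eqcl A R"
proof -
  have sym: "map_prod f f ` R \<union> (map_prod f f ` R)\<inverse> = map_prod f f ` (R \<union> R\<inverse>)" by auto
  have Id: "Id_on (f ` A) = map_prod f f ` Id_on A" by (auto simp: Id_on_def)
  have "R \<union> R\<inverse> \<subseteq> A \<times> A" using R by auto
  then have "(map_prod f f ` (R \<union> R\<inverse>))\<^sup>+ = map_prod f f ` (R \<union> R\<inverse>)\<^sup>+"
    by (rule trancl_map_prod_image[OF inj])
  then show ?thesis unfolding eqcl_def sym Id image_Un by simp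
qed

lemma Tiso_functorI:
  assumes D: "\<forall>\<alpha>\<in>D. neg_root \<alpha> \<in> D" and V: "\<forall>\<alpha>\<in>D. Fo \<alpha> \<subseteq> V"
    and maps: "\<forall>\<alpha>\<in>D. Fm \<alpha> ` Fo \<alpha> \<subseteq> Fo (neg_root \<alpha>)"
    and inverse: "\<forall>\<alpha>\<in>D. \<forall>c\<in>Fo \<alpha>. Fm (neg_root \<alpha>) (Fm \<alpha> c) = c"
  shows "Tiso_functor D V Fo Fm"
  unfolding Tiso_functor_def
proof (rule ballI, intro conjI)
  fix \<alpha> assume a: "\<alpha> \<in> D"
  have nn: "neg_root (neg_root \<alpha>) = \<alpha>" by (cases \<alpha>) auto
  show "Fo \<alpha> \<subseteq> V" "\<forall>c\<in>Fo \<alpha>. Fm (neg_root \<alpha>) (Fm \<alpha> c) = c" using V inverse a by blast+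
  have a': "neg_root \<alpha> \<in> D" using D a by blast
  show "bij_betw (Fm \<alpha>) (Fo \<alpha>) (Fo (neg_root \<alpha>))"
  proof (rule bij_betw_byWitness[where f' = "Fm (neg_root \<alpha>)"])
    show "\<forall>c\<in>Fo (neg_root \<alpha>). Fm \<alpha> (Fm (neg_root \<alpha>) c) = c"
      "Fm (neg_root \<alpha>) ` Fo (neg_root \<alpha>) \<subseteq> Fo \<alpha>"
      using inverse maps a' nn by metis+
  qed (use inverse maps a in blast)+
qed

definition transport_mor :: "('v \<Rightarrow> 'w) \<Rightarrow> 'v set \<Rightarrow> (root \<Rightarrow> 'v \<Rightarrow> 'v) \<Rightarrow> root \<Rightarrow> 'w \<Rightarrow> 'w" where
  "transport_mor \<Phi> V Fm \<alpha> d = \<Phi> (Fm \<alpha> (inv_into V \<Phi> d))"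

lemma transport_mor_apply:
  "inj_on \<Phi> V \<Longrightarrow> c \<in> V \<Longrightarrow> transport_mor \<Phi> V Fm \<alpha> (\<Phi> c) = \<Phi> (Fm \<alpha> c)"
  by (simp add: transport_mor_def)

lemma Tiso_functor_transport:
  assumes F: "Tiso_functor D V Fo Fm" and D: "\<forall>\<alpha>\<in>D. neg_root \<alpha> \<in> D"
    and inj: "inj_on \<Phi> V" and W: "\<Phi> ` V \<subseteq> W" and Go: "\<forall>\<alpha>\<in>D. Go \<alpha> = \<Phi> ` Fo \<alpha>"
  shows "Tiso_functor D W Go (transport_mor \<Phi> V Fm)"
proof (rule Tiso_functorI[OF D])
  have sub: "\<And>\<alpha>. \<alpha> \<in> D \<Longrightarrow> Fo \<alpha> \<subseteq> V"
    and maps: "\<And>\<alpha> c. \<alpha> \<in> D \<Longrightarrow> c \<in> Fo \<alpha> \<Longrightarrow> Fm \<alpha> c \<in> Fo (neg_root \<alpha>)"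
    and inverse: "\<And>\<alpha> c. \<alpha> \<in> D \<Longrightarrow> c \<in> Fo \<alpha> \<Longrightarrow> Fm (neg_root \<alpha>) (Fm \<alpha> c) = c"
    using F unfolding Tiso_functor_def bij_betw_def by blast+
  show "\<forall>\<alpha>\<in>D. Go \<alpha> \<subseteq> W" using Go sub W by blast
  show "\<forall>\<alpha>\<in>D. transport_mor \<Phi> V Fm \<alpha> ` Go \<alpha> \<subseteq> Go (neg_root \<alpha>)"
    using Go D sub maps transport_mor_apply[OF inj] by (smt (verit) image_iff subset_iff)
  show "\<forall>\<alpha>\<in>D. \<forall>d\<in>Go \<alpha>. transport_mor \<Phi> V Fm (neg_root \<alpha>) (transport_mor \<Phi> V Fm \<alpha> d) = d"
  proof (intro ballI)
    fix \<alpha> d assume a: "\<alpha> \<in> D" and "d \<in> Go \<alpha>"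
    then obtain c where c: "c \<in> Fo \<alpha>" and d: "d = \<Phi> c" using Go by blast
    have "Fm \<alpha> c \<in> V" using maps[OF a c] sub D a by blast
    then have "transport_mor \<Phi> V Fm (neg_root \<alpha>) (transport_mor \<Phi> V Fm \<alpha> (\<Phi> c))
        = \<Phi> (Fm (neg_root \<alpha>) (Fm \<alpha> c))"
      using sub[OF a] c by (simp add: transport_mor_apply[OF inj] subsetD)
    then show "transport_mor \<Phi> V Fm (neg_root \<alpha>) (transport_mor \<Phi> V Fm \<alpha> d) = d"
      using d inverse[OF a c] by simp
  qed
qed

section \<open>Roots and the rotation \<nu>\<close>

lemma mem_Delta_iso_iff: "(s, i, j) \<in> Delta_iso n m \<longleftrightarrow> 1 \<le> i \<and> i \<le> n \<and> 1 \<le> j \<and> j \<le> m"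
  unfolding Delta_iso_def by auto

lemma neg_root_in_Delta_iso: "\<alpha> \<in> Delta_iso n m \<Longrightarrow> neg_root \<alpha> \<in> Delta_iso n m"
  by (cases \<alpha>) (auto simp: Delta_iso_def)

lemma mod_add_one_int:
  "0 < (n::int) \<Longrightarrow> (a + 1) mod n = (if a mod n + 1 = n then 0 else a mod n + 1)"
  by (smt (verit, best) mod_add_right_eq mod_self pos_mod_bound pos_mod_sign zmod_trivial_iff)

lemma mod_diff_one_int:
  "0 < (n::int) \<Longrightarrow> (a - 1) mod n = (if a mod n = 0 then n - 1 else a mod n - 1)"
  by (smt (verit, best) mod_diff_eq mod_pos_pos_trivial pos_mod_bound pos_mod_sign zmod_minus1)

definition rot_row :: "nat \<Rightarrow> nat \<Rightarrow> int \<Rightarrow> nat" where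
  "rot_row n i k = nat ((int i - 1 + k) mod int n) + 1"

lemma rot_row_bounds: "0 < n \<Longrightarrow> 1 \<le> rot_row n i k \<and> rot_row n i k \<le> n"
  unfolding rot_row_def
  by (smt (verit) int_nat_eq nat_int nat_less_iff of_nat_0_less_iff pos_mod_bound pos_mod_sign
      Suc_eq_plus1 Suc_leI le_add2)

lemma rot_row_zero: "1 \<le> i \<Longrightarrow> i \<le> n \<Longrightarrow> rot_row n i 0 = i"
  unfolding rot_row_def by simp

lemma rot_row_add_one:
  assumes n: "0 < n"
  shows "rot_row n i (k + 1) = (if rot_row n i k < n then rot_row n i k + 1 else 1)"
proof -
  let ?a = "int i - 1 + k"
  have "(?a + 1) mod int n = (if ?a mod int n + 1 = int n then 0 else ?a mod int n + 1)"
    using mod_add_one_int[of "int n" ?a] n by simp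
  moreover have "0 \<le> ?a mod int n" "?a mod int n < int n" using n by auto
  moreover have "int i - 1 + (k + 1) = ?a + 1" by simp
  ultimately show ?thesis unfolding rot_row_def by (auto simp: nat_add_distrib)
qed

lemma rot_row_diff_one:
  assumes n: "0 < n"
  shows "rot_row n i (k - 1) = (if 1 < rot_row n i k then rot_row n i k - 1 else n)"
proof -
  let ?a = "int i - 1 + k"
  have "(?a - 1) mod int n = (if ?a mod int n = 0 then int n - 1 else ?a mod int n - 1)"
    using mod_diff_one_int[of "int n" ?a] n by simp
  moreover have "0 \<le> ?a mod int n" "?a mod int n < int n" using n by auto
  moreover have "int i - 1 + (k - 1) = ?a - 1" by simp
  ultimately show ?thesis unfolding rot_row_def by (auto simp: nat_diff_distrib)
qed

lemma nu_pow_eq_rot_row: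
  assumes n: "0 < n" and i: "1 \<le> i" "i \<le> n"
  shows "nu_pow n k (s, i, j) = (s, rot_row n i k, j)"
proof (cases "0 \<le> k")
  case True
  have "(nu n ^^ t) (s, i, j) = (s, rot_row n i (int t), j)" for t
  proof (induction t)
    case (Suc t)
    then show ?case using rot_row_add_one[OF n, of i "int t"] by (simp add: add.commute)
  qed (simp add: rot_row_zero[OF i])
  then show ?thesis using True unfolding nu_pow_def by simp
next
  case False
  have "(nu_inv n ^^ t) (s, i, j) = (s, rot_row n i (- int t), j)" for t
  proof (induction t)
    case (Suc t)
    have "- int (Suc t) = - int t - 1" by simp
    then have "rot_row n i (- int (Suc t)) = rot_row n i (- int t - 1)" by (simp only:)
    then show ?case using Suc rot_row_diff_one[OF n, of i "- int t"] by simp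
  qed (simp add: rot_row_zero[OF i])
  then show ?thesis using False unfolding nu_pow_def by simp
qed

lemma nu_pow_in_Delta_iso:
  assumes n: "0 < n" and a: "\<alpha> \<in> Delta_iso n m"
  shows "nu_pow n k \<alpha> \<in> Delta_iso n m"
proof -
  obtain s i j where "\<alpha> = (s, i, j)" by (cases \<alpha>)
  then show ?thesis
    using a rot_row_bounds[OF n, of i k] by (simp add: mem_Delta_iso_iff nu_pow_eq_rot_row[OF n])
qed

lemma nu_pow_add_one:
  assumes "0 < n" "(s, i, j) \<in> Delta_iso n m"
  shows "nu_pow n (k + 1) (s, i, j) = nu n (nu_pow n k (s, i, j))"
  using assms rot_row_add_one[of n i k] rot_row_bounds[of n i k]
  by (simp add: nu_pow_eq_rot_row mem_Delta_iso_iff)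

lemma nu_pow_neg_root:
  "0 < n \<Longrightarrow> \<alpha> \<in> Delta_iso n m \<Longrightarrow> nu_pow n k (neg_root \<alpha>) = neg_root (nu_pow n k \<alpha>)"
  by (cases \<alpha>) (simp add: nu_pow_eq_rot_row mem_Delta_iso_iff)

section \<open>Young diagrams\<close>

lemma Xset_iff_nth: "lam \<in> Xset n m \<longleftrightarrow> length lam = n \<and>
   (\<forall>k. Suc k < n \<longrightarrow> lam ! Suc k \<le> lam ! k) \<and> (\<forall>k<n. lam ! k \<le> m)"
proof -
  have "transp (\<lambda>x y :: nat. x \<ge> y)" by (auto simp: transp_def)
  then show ?thesis
    unfolding Xset_def by (auto simp: sorted_wrt_iff_nth_Suc_transp all_set_conv_all_nth)
qed

lemma length_Xset: "lam \<in> Xset n m \<Longrightarrow> length lam = n"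
  by (simp add: Xset_def)

lemma row_of_boxes: "1 \<le> i \<Longrightarrow> i \<le> n \<Longrightarrow> {j. (i, j) \<in> boxes n lam} = {1..lam ! (n - i)}"
  by (auto simp: boxes_def)

lemma boxes_inj:
  assumes "length a = n" "length b = n" "boxes n a = boxes n b"
  shows "a = b"
proof (rule nth_equalityI)
  show "length a = length b" using assms by simp
  fix k assume k: "k < length a"
  have i: "1 \<le> n - k" "n - k \<le> n" and nk: "n - (n - k) = k" using k assms by auto
  have "{j. (n - k, j) \<in> boxes n a} = {j. (n - k, j) \<in> boxes n b}" using assms(3) by simp
  then have "{1..a ! k} = {1..b ! k}" using row_of_boxes[OF i, of a] row_of_boxes[OF i, of b]
    unfolding nk by simp
  from arg_cong[OF this, of card] show "a ! k = b ! k" by simp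
qed

lemma boxes_list_update:
  assumes "length lam = n" "1 \<le> i" "i \<le> n"
  shows "boxes n (lam[n - i := v]) =
    {(r, c). (r, c) \<in> boxes n lam \<and> r \<noteq> i} \<union> {(i, c) | c. 1 \<le> c \<and> c \<le> v}"
proof (rule set_eqI, clarify)
  fix r c
  have "1 \<le> r \<Longrightarrow> r \<le> n \<Longrightarrow> r \<noteq> i \<Longrightarrow> n - i \<noteq> n - r" using assms by auto
  then show "(r, c) \<in> boxes n (lam[n - i := v]) \<longleftrightarrow>
      (r, c) \<in> {(r, c). (r, c) \<in> boxes n lam \<and> r \<noteq> i} \<union> {(i, c) | c. 1 \<le> c \<and> c \<le> v}"
    using assms by (cases "r = i") (auto simp: boxes_def)
qed

lemma add_box_in_Xset:
  assumes X: "lam \<in> Xset n m" and i: "1 \<le> i" "i \<le> n" and jv: "j = lam ! (n - i) + 1"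
    and jm: "j \<le> m" and jn: "i < n \<longrightarrow> j \<le> lam ! (n - i - 1)"
  shows "lam[n - i := j] \<in> Xset n m"
  unfolding Xset_iff_nth
proof (intro conjI allI impI)
  have ln: "length lam = n" using length_Xset[OF X] .
  then show "length (lam[n - i := j]) = n" by simp
  fix k assume k: "Suc k < n"
  show "lam[n - i := j] ! Suc k \<le> lam[n - i := j] ! k"
  proof (cases "k = n - i")
    case True
    then show ?thesis using X k ln jv unfolding Xset_iff_nth by (auto simp: nth_list_update)
  next
    case False
    show ?thesis
    proof (cases "Suc k = n - i")
      case True
      then have "i < n" "k = n - i - 1" using i by auto
      then show ?thesis using jn True False ln k by (auto simp: nth_list_update)
    next
      case _: False
      then show ?thesis using \<open>k \<noteq> n - i\<close> X k ln unfolding Xset_iff_nth by (auto simp: nth_list_update)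
    qed
  qed
next
  fix k assume "k < n"
  then show "lam[n - i := j] ! k \<le> m" using X jm unfolding Xset_iff_nth by (cases "k = n - i") auto
qed

lemma remove_box_in_Xset:
  assumes X: "lam \<in> Xset n m" and i: "1 \<le> i" "i \<le> n" and jv: "j = lam ! (n - i)"
    and jn: "1 < i \<longrightarrow> lam ! (n - i + 1) < j"
  shows "lam[n - i := j - 1] \<in> Xset n m"
  unfolding Xset_iff_nth
proof (intro conjI allI impI)
  have ln: "length lam = n" using length_Xset[OF X] .
  then show "length (lam[n - i := j - 1]) = n" by simp
  fix k assume k: "Suc k < n"
  have mono: "lam ! Suc k \<le> lam ! k" using X k unfolding Xset_iff_nth by blast
  show "lam[n - i := j - 1] ! Suc k \<le> lam[n - i := j - 1] ! k"
  proof (cases "k = n - i")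
    case True
    then show ?thesis using jn k ln by (auto simp: nth_list_update)
  next
    case False
    show ?thesis
    proof (cases "Suc k = n - i")
      case True
      then show ?thesis using mono jv False ln k by (auto simp: nth_list_update)
    next
      case _: False
      then show ?thesis using mono False ln k by (auto simp: nth_list_update)
    qed
  qed
next
  fix k assume "k < n"
  then show "lam[n - i := j - 1] ! k \<le> m"
    using X jv unfolding Xset_iff_nth by (cases "k = n - i") (auto simp: le_diff_iff')
qed

lemma Xc_TrueD:
  assumes "lam \<in> Xc n m (True, i, j)"
  shows "lam \<in> Xset n m \<and> 1 \<le> i \<and> i \<le> n \<and> j = lam ! (n - i) + 1 \<and> j \<le> m \<and>
    (i < n \<longrightarrow> j \<le> lam ! (n - i - 1))"
proof -
  obtain \<mu> where X: "lam \<in> Xset n m" and nb: "(i, j) \<notin> boxes n lam" and mu: "\<mu> \<in> Xset n m"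
    and bm: "boxes n \<mu> = insert (i, j) (boxes n lam)" using assms by auto
  have "(i, j) \<in> boxes n \<mu>" using bm by auto
  then have i: "1 \<le> i" "i \<le> n" and j1: "1 \<le> j" by (auto simp: boxes_def)
  have ln: "length lam = n" "length \<mu> = n" using X mu by (auto simp: length_Xset)
  have "{1..\<mu> ! (n - i)} = insert j {1..lam ! (n - i)}"
    using bm row_of_boxes[OF i, of \<mu>] row_of_boxes[OF i, of lam] by auto
  moreover have "j \<notin> {1..lam ! (n - i)}" using nb i j1 by (auto simp: boxes_def)
  ultimately have jv: "j = lam ! (n - i) + 1"
    by (metis atLeastAtMost_iff card_atLeastAtMost card_insert_disjoint diff_Suc_1 finite_atLeastAtMost
        insertI1 le_SucE Suc_eq_plus1 le_antisym linorder_not_le)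
  have "boxes n \<mu> = boxes n (lam[n - i := j])"
    unfolding bm using boxes_list_update[OF ln(1) i, of j] jv by (auto simp: boxes_def)
  then have mu_eq: "\<mu> = lam[n - i := j]" using boxes_inj ln by simp
  have "j \<le> m" using mu ln i unfolding Xset_iff_nth mu_eq
    by (metis diff_less le_less_trans less_numeral_extra(1) nth_list_update_eq zero_less_diff linorder_not_le)
  moreover have "j \<le> lam ! (n - i - 1)" if "i < n"
  proof -
    have "Suc (n - i - 1) < n" "n - i - 1 \<noteq> n - i" "Suc (n - i - 1) = n - i" using i that by auto
    then show ?thesis using mu ln unfolding Xset_iff_nth mu_eq by (metis nth_list_update_eq nth_list_update_neq)
  qed
  ultimately show ?thesis using X i jv by simp
qed

lemma Xc_True_iff:
  "lam \<in> Xc n m (True, i, j) \<longleftrightarrow> lam \<in> Xset n m \<and> 1 \<le> i \<and> i \<le> n \<and>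
     j = lam ! (n - i) + 1 \<and> j \<le> m \<and> (i < n \<longrightarrow> j \<le> lam ! (n - i - 1))"
proof
  assume h: "lam \<in> Xset n m \<and> 1 \<le> i \<and> i \<le> n \<and> j = lam ! (n - i) + 1 \<and> j \<le> m \<and>
    (i < n \<longrightarrow> j \<le> lam ! (n - i - 1))"
  then have ln: "length lam = n" and i: "1 \<le> i" "i \<le> n" by (auto simp: length_Xset)
  have "lam[n - i := j] \<in> Xset n m" using add_box_in_Xset h by blast
  moreover have "(i, j) \<notin> boxes n lam" using h by (auto simp: boxes_def)
  moreover have "boxes n (lam[n - i := j]) = insert (i, j) (boxes n lam)"
    using boxes_list_update[OF ln i, of j] h by (auto simp: boxes_def)
  ultimately show "lam \<in> Xc n m (True, i, j)" using h by auto
qed (rule Xc_TrueD)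

lemma Xc_FalseD:
  assumes "lam \<in> Xc n m (False, i, j)"
  shows "lam \<in> Xset n m \<and> 1 \<le> i \<and> i \<le> n \<and> j = lam ! (n - i) \<and> 1 \<le> j \<and>
    (1 < i \<longrightarrow> lam ! (n - i + 1) < j)"
proof -
  obtain \<mu> where X: "lam \<in> Xset n m" and ib: "(i, j) \<in> boxes n lam" and mu: "\<mu> \<in> Xset n m"
    and bm: "boxes n \<mu> = boxes n lam - {(i, j)}" using assms by auto
  from ib have i: "1 \<le> i" "i \<le> n" and j1: "1 \<le> j" and jl: "j \<le> lam ! (n - i)"
    by (auto simp: boxes_def)
  have ln: "length lam = n" "length \<mu> = n" using X mu by (auto simp: length_Xset)
  have row: "{1..\<mu> ! (n - i)} = {1..lam ! (n - i)} - {j}"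
    using bm row_of_boxes[OF i, of \<mu>] row_of_boxes[OF i, of lam] by auto
  then have "\<mu> ! (n - i) = lam ! (n - i) - 1" using j1 jl by (metis card_Diff_singleton
      atLeastAtMost_iff card_atLeastAtMost diff_Suc_1 finite_atLeastAtMost)
  moreover have "j \<notin> {1..\<mu> ! (n - i)}" using row by auto
  ultimately have jv: "j = lam ! (n - i)" using jl j1 by auto
  have "boxes n \<mu> = boxes n (lam[n - i := j - 1])"
    unfolding bm using boxes_list_update[OF ln(1) i, of "j - 1"] jv i by (auto simp: boxes_def)
  then have mu_eq: "\<mu> = lam[n - i := j - 1]" using boxes_inj ln by simp
  have "lam ! (n - i + 1) < j" if "1 < i"
  proof -
    have s: "Suc (n - i) < n" using i that by auto
    have "\<mu> ! Suc (n - i) \<le> \<mu> ! (n - i)" using mu s unfolding Xset_iff_nth by blast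
    then show ?thesis using ln i s j1 unfolding mu_eq by simp
  qed
  then show ?thesis using X i jv j1 by simp
qed

lemma Xc_False_iff:
  "lam \<in> Xc n m (False, i, j) \<longleftrightarrow> lam \<in> Xset n m \<and> 1 \<le> i \<and> i \<le> n \<and>
     j = lam ! (n - i) \<and> 1 \<le> j \<and> (1 < i \<longrightarrow> lam ! (n - i + 1) < j)"
proof
  assume h: "lam \<in> Xset n m \<and> 1 \<le> i \<and> i \<le> n \<and> j = lam ! (n - i) \<and> 1 \<le> j \<and>
    (1 < i \<longrightarrow> lam ! (n - i + 1) < j)"
  then have ln: "length lam = n" and i: "1 \<le> i" "i \<le> n" by (auto simp: length_Xset)
  have "lam[n - i := j - 1] \<in> Xset n m" using remove_box_in_Xset h by blast
  moreover have "(i, j) \<in> boxes n lam" using h by (auto simp: boxes_def)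
  moreover have "boxes n (lam[n - i := j - 1]) = boxes n lam - {(i, j)}"
    using boxes_list_update[OF ln i, of "j - 1"] h by (auto simp: boxes_def)
  ultimately show "lam \<in> Xc n m (False, i, j)" using h by auto
qed (rule Xc_FalseD)

lemma Xc_in_Xset: "lam \<in> Xc n m \<beta> \<Longrightarrow> lam \<in> Xset n m"
  by (cases \<beta>) (case_tac a; auto)

lemma t_op_add_box_Xc:
  assumes "lam \<in> Xc n m (True, i, j)"
  shows "t_op n (True, i, j) lam \<in> Xc n m (False, i, j)"
proof -
  have h: "lam \<in> Xset n m" "1 \<le> i" "i \<le> n" "j = lam ! (n - i) + 1" "j \<le> m"
    "i < n \<longrightarrow> j \<le> lam ! (n - i - 1)"
    using assms Xc_True_iff by auto
  then have ln: "length lam = n" by (simp add: length_Xset)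
  have "lam[n - i := j] \<in> Xc n m (False, i, j)"
    unfolding Xc_False_iff
  proof (intro conjI impI)
    assume "1 < i"
    then have "Suc (n - i) < n" using h by auto
    then show "lam[n - i := j] ! (n - i + 1) < j" using h ln unfolding Xset_iff_nth by auto
  qed (use add_box_in_Xset[OF h] h ln in auto)
  then show ?thesis using h by simp
qed

lemma t_op_remove_box_Xc:
  assumes "lam \<in> Xc n m (False, i, j)"
  shows "t_op n (False, i, j) lam \<in> Xc n m (True, i, j)"
proof -
  have h: "lam \<in> Xset n m" "1 \<le> i" "i \<le> n" "j = lam ! (n - i)" "1 \<le> j"
    "1 < i \<longrightarrow> lam ! (n - i + 1) < j"
    using assms Xc_False_iff by auto
  then have ln: "length lam = n" by (simp add: length_Xset)
  have "lam[n - i := j - 1] \<in> Xc n m (True, i, j)"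
    unfolding Xc_True_iff
  proof (intro conjI impI)
    show "j \<le> m" using h ln unfolding Xset_iff_nth by auto
    assume "i < n"
    then have "Suc (n - i - 1) < n" "n - i - 1 \<noteq> n - i" "Suc (n - i - 1) = n - i" using h by auto
    then show "j \<le> lam[n - i := j - 1] ! (n - i - 1)"
      using h ln unfolding Xset_iff_nth by (metis nth_list_update_neq)
  qed (use remove_box_in_Xset[OF h(1-4) h(6)] h ln in auto)
  then show ?thesis using h by simp
qed

lemma t_op_Xc:
  assumes "lam \<in> Xc n m \<beta>"
  shows "t_op n \<beta> lam \<in> Xc n m (neg_root \<beta>) \<and> t_op n (neg_root \<beta>) (t_op n \<beta> lam) = lam"
proof -
  obtain s i j where b: "\<beta> = (s, i, j)" by (cases \<beta>)
  have "n - i < length lam" "lam ! (n - i) \<noteq> 0 \<or> s"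
    using assms Xc_True_iff[of lam n m i j] Xc_False_iff[of lam n m i j] b
    by (cases s; auto simp: length_Xset)+
  then show ?thesis
    using assms t_op_add_box_Xc[of lam n m i j] t_op_remove_box_Xc[of lam n m i j] b by (cases s) auto
qed

declare Xc.simps [simp del]

lemma length_lam_bar: "length lam = n \<Longrightarrow> 0 < n \<Longrightarrow> length (lam_bar lam) = n"
  unfolding lam_bar_def by simp

lemma nth_lam_bar:
  "length lam = n \<Longrightarrow> 0 < n \<Longrightarrow> k < n \<Longrightarrow> lam_bar lam ! k = (if k < n - 1 then lam ! Suc k else 0)"
  unfolding lam_bar_def by (auto simp: nth_append nth_tl)

lemma lam_bar_in_Xset:
  assumes n: "0 < n" and X: "lam \<in> Xset n m"
  shows "lam_bar lam \<in> Xset n m"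
proof -
  have ln: "length lam = n" using length_Xset[OF X] .
  have "lam ! Suc (Suc k) \<le> lam ! Suc k" if "Suc k < n - 1" for k
    using X that unfolding Xset_iff_nth by auto
  then show ?thesis
    using X length_lam_bar[OF ln n] unfolding Xset_iff_nth by (auto simp: nth_lam_bar[OF ln n])
qed

lemma lam_bar_inj: "lam \<noteq> [] \<Longrightarrow> mu \<noteq> [] \<Longrightarrow> lam ! 0 = mu ! 0 \<Longrightarrow> lam_bar lam = lam_bar mu \<Longrightarrow> lam = mu"
  by (cases lam; cases mu) (auto simp: lam_bar_def)

lemma lam_bar_in_Xc_iff:
  assumes n: "0 < n" and X: "lam \<in> Xset n m" and full: "lam ! 0 = m" and i: "1 \<le> i" "i < n"
  shows "lam_bar lam \<in> Xc n m (s, Suc i, j) \<longleftrightarrow> lam \<in> Xc n m (s, i, j)"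
proof -
  have ln: "length lam = n" using length_Xset[OF X] .
  have XB: "lam_bar lam \<in> Xset n m" using lam_bar_in_Xset[OF n X] .
  have "n - Suc i < n - 1" "Suc (n - Suc i) = n - i" "n - Suc i < n" using i by arith+
  then have b1: "lam_bar lam ! (n - Suc i) = lam ! (n - i)" by (simp add: nth_lam_bar[OF ln n])
  have b2: "lam_bar lam ! (n - Suc i - 1) = lam ! (n - i - 1)" if "Suc i < n"
  proof -
    have "n - Suc i - 1 < n - 1" "Suc (n - Suc i - 1) = n - i - 1" using that by arith+
    then show ?thesis by (simp add: nth_lam_bar[OF ln n])
  qed
  have b3: "lam_bar lam ! (n - Suc i + 1) = (if 1 < i then lam ! (n - i + 1) else 0)"
    using i by (auto simp: nth_lam_bar[OF ln n] Suc_diff_Suc)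
  have "lam ! (n - i - 1) = m" if "Suc i = n" using full that by simp
  then show ?thesis
    using Xc_True_iff[of lam n m i j] Xc_True_iff[of "lam_bar lam" n m "Suc i" j]
      Xc_False_iff[of lam n m i j] Xc_False_iff[of "lam_bar lam" n m "Suc i" j] X XB i b1 b2 b3
    by (cases s) auto
qed

lemma t_op_lam_bar:
  assumes n: "0 < n" and ln: "length lam = n" and i: "1 \<le> i" "i < n"
  shows "t_op n (s, Suc i, j) (lam_bar lam) = lam_bar (t_op n (s, i, j) lam)"
proof -
  have "n - Suc i < n - 1" "Suc (n - Suc i) = n - i" "n - Suc i < n" using i by arith+
  then have b1: "lam_bar lam ! (n - Suc i) = lam ! (n - i)" by (simp add: nth_lam_bar[OF ln n])
  have "(lam_bar lam)[n - Suc i := v] = lam_bar (lam[n - i := v])" for v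
  proof (rule nth_equalityI)
    have l2: "length (lam[n - i := v]) = n" using ln by simp
    then show "length ((lam_bar lam)[n - Suc i := v]) = length (lam_bar (lam[n - i := v]))"
      using length_lam_bar[OF ln n] length_lam_bar[OF l2 n] by simp
    fix k assume "k < length ((lam_bar lam)[n - Suc i := v])"
    then have k: "k < n" using length_lam_bar[OF ln n] by simp
    then show "(lam_bar lam)[n - Suc i := v] ! k = lam_bar (lam[n - i := v]) ! k"
      using i ln by (auto simp: nth_lam_bar[OF ln n] nth_lam_bar[OF l2 n] nth_list_update
          length_lam_bar[OF ln n])
  qed
  then show ?thesis using b1 by (cases s) auto
qed

lemma t_op_nth_0: "1 \<le> i \<Longrightarrow> i < n \<Longrightarrow> length lam = n \<Longrightarrow> t_op n (s, i, j) lam ! 0 = lam ! 0"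
  by (cases s) (auto simp: nth_list_update)

text \<open>The two ways in which the row index can wrap around: a full bottom row has no outer corner,
  and the top row of \<lambda>bar is empty.\<close>

lemma full_not_in_Xc_True_last_row: "lam ! 0 = m \<Longrightarrow> lam \<notin> Xc n m (True, n, j)"
  unfolding Xc_True_iff by auto

lemma lam_bar_not_in_Xc_False_first_row:
  "0 < n \<Longrightarrow> lam \<in> Xset n m \<Longrightarrow> lam_bar lam \<notin> Xc n m (False, 1, j)"
  unfolding Xc_False_iff using nth_lam_bar[of lam n "n - 1"] by (auto simp: length_Xset)

section \<open>Normal forms in [X \<times> Z]\<close>

definition full_prefix :: "nat \<Rightarrow> nat list \<Rightarrow> nat" where
  "full_prefix m lam = length (takeWhile (\<lambda>x. x = m) lam)"

lemma full_prefix_le_length: "full_prefix m lam \<le> length lam"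
  by (simp add: full_prefix_def length_takeWhile_le)

lemma full_prefix_pos_iff: "lam \<noteq> [] \<Longrightarrow> 0 < full_prefix m lam \<longleftrightarrow> lam ! 0 = m"
  by (cases lam) (auto simp: full_prefix_def)

lemma full_prefix_lam_bar:
  assumes "0 < m" "lam ! 0 = m" "lam \<noteq> []"
  shows "full_prefix m (lam_bar lam) = full_prefix m lam - 1"
proof -
  obtain x t where l: "lam = x # t" using assms by (cases lam) auto
  have "takeWhile (\<lambda>x. x = m) (t @ [0]) = takeWhile (\<lambda>x. x = m) t"
  proof (cases "\<forall>y\<in>set t. y = m")
    case True
    then have "takeWhile (\<lambda>x. x = m) (t @ [0]) = t @ takeWhile (\<lambda>x. x = m) [0]"
      by (intro takeWhile_append2) auto
    moreover have "takeWhile (\<lambda>x. x = m) t = t" using True takeWhile_eq_all_conv by blast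
    moreover have "takeWhile (\<lambda>x. x = m) [0::nat] = []" using assms(1) by simp
    ultimately show ?thesis by (metis append_Nil2)
  qed auto
  then show ?thesis using assms l by (simp add: full_prefix_def lam_bar_def)
qed

definition bar_step :: "nat \<Rightarrow> nat list \<times> int \<Rightarrow> nat list \<times> int" where
  "bar_step m x = (if fst x ! 0 = m then (lam_bar (fst x), snd x + 1) else x)"

definition bar_nf :: "nat \<Rightarrow> nat \<Rightarrow> nat list \<times> int \<Rightarrow> nat list \<times> int" where
  "bar_nf n m x = (bar_step m ^^ n) x"

abbreviation XZ_base :: "nat \<Rightarrow> nat \<Rightarrow> (nat list \<times> int) set" where
  "XZ_base n m \<equiv> Xset n m \<times> (UNIV :: int set)"

definition XZ_gen :: "nat \<Rightarrow> nat \<Rightarrow> ((nat list \<times> int) \<times> (nat list \<times> int)) set" where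
  "XZ_gen n m = {((lam, k), (lam_bar lam, k + 1)) | lam k. lam \<in> Xset n m \<and> lam ! 0 = m}"

lemma XZ_rel_eq_eqcl_gen: "XZ_rel n m = eqcl (XZ_base n m) (XZ_gen n m)"
  unfolding XZ_rel_def XZ_gen_def ..

lemma XZ_gen_subset: "0 < n \<Longrightarrow> XZ_gen n m \<subseteq> XZ_base n m \<times> XZ_base n m"
  unfolding XZ_gen_def using lam_bar_in_Xset by auto

lemma Xset_nonempty: "0 < n \<Longrightarrow> lam \<in> Xset n m \<Longrightarrow> lam \<noteq> []"
  by (auto simp: Xset_def)

lemma bar_step_in_base: "0 < n \<Longrightarrow> x \<in> XZ_base n m \<Longrightarrow> bar_step m x \<in> XZ_base n m"
  unfolding bar_step_def using lam_bar_in_Xset by auto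

lemma full_prefix_bar_step:
  assumes "0 < n" "0 < m" "x \<in> XZ_base n m"
  shows "full_prefix m (fst (bar_step m x)) = full_prefix m (fst x) - 1"
  using assms full_prefix_lam_bar[of m "fst x"] full_prefix_pos_iff[of "fst x" m]
    Xset_nonempty[of n "fst x" m]
  by (cases "fst x ! 0 = m") (auto simp: bar_step_def)

lemma bar_step_pow:
  assumes "0 < n" "0 < m" "x \<in> XZ_base n m"
  shows "(bar_step m ^^ a) x \<in> XZ_base n m \<and>
    full_prefix m (fst ((bar_step m ^^ a) x)) = full_prefix m (fst x) - a"
  by (induction a) (use assms bar_step_in_base full_prefix_bar_step in auto)

lemma bar_step_fixed:
  "0 < n \<Longrightarrow> x \<in> XZ_base n m \<Longrightarrow> full_prefix m (fst x) = 0 \<Longrightarrow> bar_step m x = x"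
  using full_prefix_pos_iff[of "fst x" m] Xset_nonempty[of n "fst x" m] by (auto simp: bar_step_def)

lemma full_prefix_le: "x \<in> XZ_base n m \<Longrightarrow> full_prefix m (fst x) \<le> n"
  using full_prefix_le_length[of m "fst x"] by (auto simp: length_Xset)

lemma bar_step_pow_stable:
  assumes "0 < n" "0 < m" "x \<in> XZ_base n m" "full_prefix m (fst x) \<le> a"
  shows "(bar_step m ^^ a) x = (bar_step m ^^ full_prefix m (fst x)) x"
proof -
  let ?t = "full_prefix m (fst x)"
  let ?y = "(bar_step m ^^ ?t) x"
  have "bar_step m ?y = ?y" using bar_step_fixed[OF assms(1)] bar_step_pow[OF assms(1-3), of ?t] by auto
  then have "(bar_step m ^^ d) ?y = ?y" for d by (induction d) auto
  moreover have "(bar_step m ^^ a) x = (bar_step m ^^ (a - ?t)) ?y"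
    using assms(4) by (metis funpow_add le_add_diff_inverse2 comp_apply)
  ultimately show ?thesis by simp
qed

lemma bar_nf_eq: "0 < n \<Longrightarrow> 0 < m \<Longrightarrow> x \<in> XZ_base n m \<Longrightarrow> bar_nf n m x = (bar_step m ^^ full_prefix m (fst x)) x"
  unfolding bar_nf_def using bar_step_pow_stable full_prefix_le by blast

lemma bar_nf_bar_step:
  assumes "0 < n" "0 < m" "x \<in> XZ_base n m"
  shows "bar_nf n m (bar_step m x) = bar_nf n m x"
proof -
  have "full_prefix m (fst (bar_nf n m x)) = 0"
    using bar_step_pow[OF assms, of n] full_prefix_le[OF assms(3)] by (simp add: bar_nf_def)
  then have "bar_step m (bar_nf n m x) = bar_nf n m x"
    using bar_step_fixed[OF assms(1)] bar_step_pow[OF assms, of n] by (simp add: bar_nf_def)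
  then show ?thesis unfolding bar_nf_def by (simp add: funpow_swap1)
qed

lemma XZ_rel_eq_bar_nf:
  assumes n: "0 < n" and m: "0 < m"
  shows "XZ_rel n m = {(x, y). x \<in> XZ_base n m \<and> y \<in> XZ_base n m \<and> bar_nf n m x = bar_nf n m y}"
  unfolding XZ_rel_eq_eqcl_gen
proof (rule eqcl_eq_kernel[OF XZ_gen_subset[OF n]])
  fix x assume x: "x \<in> XZ_base n m"
  have "(x, (bar_step m ^^ a) x) \<in> (XZ_gen n m \<union> (XZ_gen n m)\<inverse>)\<^sup>*" for a
  proof (induction a)
    case (Suc a)
    let ?y = "(bar_step m ^^ a) x"
    have "?y \<in> XZ_base n m" using bar_step_pow[OF n m x] by blast
    then have "bar_step m ?y = ?y \<or> (?y, bar_step m ?y) \<in> XZ_gen n m"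
      unfolding bar_step_def XZ_gen_def by (cases ?y) auto
    then show ?case using Suc.IH by (auto intro: rtrancl_into_rtrancl)
  qed simp
  then show "(x, bar_nf n m x) \<in> (XZ_gen n m \<union> (XZ_gen n m)\<inverse>)\<^sup>*" unfolding bar_nf_def by blast
next
  fix x y assume "(x, y) \<in> XZ_gen n m"
  then have "bar_step m x = y" "x \<in> XZ_base n m" unfolding XZ_gen_def bar_step_def by auto
  then show "bar_nf n m x = bar_nf n m y" using bar_nf_bar_step[OF n m] by metis
qed

lemma clsX_eq_bar_nf:
  "0 < n \<Longrightarrow> 0 < m \<Longrightarrow> x \<in> XZ_base n m \<Longrightarrow> clsX n m x = {y \<in> XZ_base n m. bar_nf n m y = bar_nf n m x}"
  unfolding clsX_def using XZ_rel_eq_bar_nf by auto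

lemma bar_step_pow_inj:
  assumes n: "0 < n" and m: "0 < m"
  shows "x \<in> XZ_base n m \<Longrightarrow> y \<in> XZ_base n m \<Longrightarrow> e \<le> full_prefix m (fst x) \<Longrightarrow>
    e \<le> full_prefix m (fst y) \<Longrightarrow> (bar_step m ^^ e) x = (bar_step m ^^ e) y \<Longrightarrow> x = y"
proof (induction e arbitrary: x y)
  case (Suc e)
  have "(bar_step m ^^ e) (bar_step m x) = (bar_step m ^^ e) (bar_step m y)"
    using Suc.prems(5) by (simp only: funpow_Suc_right comp_apply)
  then have eq: "bar_step m x = bar_step m y"
    using Suc.IH bar_step_in_base[OF n] Suc.prems full_prefix_bar_step[OF n m] by simp
  have ne: "fst x \<noteq> []" "fst y \<noteq> []" using Suc.prems(1,2) Xset_nonempty[OF n] by auto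
  have "fst x ! 0 = m" "fst y ! 0 = m"
    using full_prefix_pos_iff[OF ne(1), of m] full_prefix_pos_iff[OF ne(2), of m] Suc.prems(3,4)
    by auto
  then show ?case using eq lam_bar_inj[OF ne] by (auto simp: bar_step_def prod_eq_iff)
qed simp

lemma bar_nf_eq_imp_bar_step_pow:
  assumes n: "0 < n" and m: "0 < m" and xy: "x \<in> XZ_base n m" "y \<in> XZ_base n m"
    and N: "bar_nf n m x = bar_nf n m y" and T: "full_prefix m (fst y) \<le> full_prefix m (fst x)"
  shows "y = (bar_step m ^^ (full_prefix m (fst x) - full_prefix m (fst y))) x"
proof -
  let ?d = "full_prefix m (fst x) - full_prefix m (fst y)"
  let ?x = "(bar_step m ^^ ?d) x"
  have x': "?x \<in> XZ_base n m" "full_prefix m (fst ?x) = full_prefix m (fst y)"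
    using bar_step_pow[OF n m xy(1), of ?d] T by auto
  have "(bar_step m ^^ full_prefix m (fst y)) ?x = (bar_step m ^^ (full_prefix m (fst y) + ?d)) x"
    by (simp add: funpow_add)
  also have "\<dots> = (bar_step m ^^ full_prefix m (fst x)) x" using T by simp
  also have "\<dots> = (bar_step m ^^ full_prefix m (fst y)) y"
    using N bar_nf_eq[OF n m xy(1)] bar_nf_eq[OF n m xy(2)] by simp
  finally have "?x = y"
    using bar_step_pow_inj[OF n m x'(1) xy(2), of "full_prefix m (fst y)"] x'(2) by simp
  then show ?thesis by simp
qed

section \<open>The functor F\<close>

definition F_dom :: "nat \<Rightarrow> nat \<Rightarrow> root \<Rightarrow> (nat list \<times> int) set" where
  "F_dom n m \<alpha> = {x. fst x \<in> Xc n m (nu_pow n (snd x) \<alpha>)}"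

definition F_step :: "nat \<Rightarrow> root \<Rightarrow> nat list \<times> int \<Rightarrow> nat list \<times> int" where
  "F_step n \<alpha> x = (t_op n (nu_pow n (snd x) \<alpha>) (fst x), snd x)"

lemma F_dom_in_base: "x \<in> F_dom n m \<alpha> \<Longrightarrow> x \<in> XZ_base n m"
  unfolding F_dom_def using Xc_in_Xset by (cases x) auto

lemma F_step_in_base: "x \<in> F_dom n m \<alpha> \<Longrightarrow> F_step n \<alpha> x \<in> XZ_base n m"
  unfolding F_dom_def F_step_def using t_op_Xc Xc_in_Xset by (cases x) fastforce

lemma F_step_bar_step:
  assumes n: "0 < n" and a: "(s, i, j) \<in> Delta_iso n m" and x: "x \<in> F_dom n m (s, i, j)"
    and full: "fst x ! 0 = m" and r: "rot_row n i (snd x) < n"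
  shows "bar_step m x \<in> F_dom n m (s, i, j) \<and>
    F_step n (s, i, j) (bar_step m x) = bar_step m (F_step n (s, i, j) x)"
proof -
  obtain lam k where xk: "x = (lam, k)" by (cases x)
  let ?r = "rot_row n i k"
  have i: "1 \<le> i" "i \<le> n" using a by (auto simp: mem_Delta_iso_iff)
  have nuk: "nu_pow n k (s, i, j) = (s, ?r, j)" using nu_pow_eq_rot_row[OF n i] by simp
  have nu1: "nu_pow n (k + 1) (s, i, j) = (s, Suc ?r, j)"
    using nu_pow_add_one[OF n a, of k] nuk r xk by simp
  have lX: "lam \<in> Xc n m (s, ?r, j)" using x xk nuk by (simp add: F_dom_def)
  have X: "lam \<in> Xset n m" using Xc_in_Xset[OF lX] .
  have r1: "1 \<le> ?r" "?r < n" using rot_row_bounds[OF n] r xk by auto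
  have "lam_bar lam \<in> Xc n m (s, Suc ?r, j)"
    using lam_bar_in_Xc_iff[OF n X _ r1] lX full xk by simp
  moreover have "t_op n (s, ?r, j) lam ! 0 = m"
    using t_op_nth_0[OF r1] length_Xset[OF X] full xk by simp
  ultimately show ?thesis
    using xk full nuk nu1 t_op_lam_bar[OF n length_Xset[OF X] r1]
    by (simp add: F_dom_def F_step_def bar_step_def)
qed

text \<open>After a wrap-around the box to be removed lies in the empty top row of \<lambda>bar. Further steps
  shift the diagram and the box index down by one row together, so the box stays non-removable;
  the invariant full_prefix + row \<le> n rules out a second wrap-around.\<close>

lemma bar_step_pow_not_in_F_dom_False:
  assumes n: "0 < n" and m: "0 < m" and a: "(False, i, j) \<in> Delta_iso n m"
  shows "z \<in> XZ_base n m \<Longrightarrow> nu_pow n (snd z) (False, i, j) = (False, r, j) \<Longrightarrow> 1 \<le> r \<Longrightarrow>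
    fst z \<notin> Xc n m (False, r, j) \<Longrightarrow> full_prefix m (fst z) + r \<le> n \<Longrightarrow>
    (bar_step m ^^ e) z \<notin> F_dom n m (False, i, j)"
proof (induction e arbitrary: z r)
  case 0 then show ?case by (simp add: F_dom_def)
next
  case (Suc e)
  have eq: "(bar_step m ^^ Suc e) z = (bar_step m ^^ e) (bar_step m z)"
    by (simp only: funpow_Suc_right comp_apply)
  show ?case
  proof (cases "fst z ! 0 = m")
    case False
    then have "bar_step m z = z" by (simp add: bar_step_def)
    then show ?thesis using eq Suc by simp
  next
    case True
    have zX: "fst z \<in> Xset n m" using Suc.prems(1) by auto
    have T0: "0 < full_prefix m (fst z)" using full_prefix_pos_iff[OF Xset_nonempty[OF n zX]] True by simp
    then have rn: "r < n" using Suc.prems(5) by simp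
    have fz: "bar_step m z = (lam_bar (fst z), snd z + 1)" using True by (simp add: bar_step_def)
    have "nu_pow n (snd (bar_step m z)) (False, i, j) = (False, Suc r, j)"
      using nu_pow_add_one[OF n a, of "snd z"] Suc.prems(2) rn fz by simp
    moreover have "fst (bar_step m z) \<notin> Xc n m (False, Suc r, j)"
      using lam_bar_in_Xc_iff[OF n zX True Suc.prems(3) rn, of False j] Suc.prems(4) fz by simp
    moreover have "full_prefix m (fst (bar_step m z)) + Suc r \<le> n"
      using full_prefix_bar_step[OF n m Suc.prems(1)] Suc.prems(5) T0 by simp
    ultimately show ?thesis using Suc.IH[OF bar_step_in_base[OF n Suc.prems(1)]] eq by simp
  qed
qed

lemma bar_step_pow_wrap_not_in_F_dom:
  assumes n: "0 < n" and m: "0 < m" and a: "(s, i, j) \<in> Delta_iso n m"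
    and x: "x \<in> F_dom n m (s, i, j)" and full: "fst x ! 0 = m" and r: "rot_row n i (snd x) = n"
  shows "(bar_step m ^^ Suc e) x \<notin> F_dom n m (s, i, j)"
proof -
  obtain lam k where xk: "x = (lam, k)" by (cases x)
  have i: "1 \<le> i" "i \<le> n" using a by (auto simp: mem_Delta_iso_iff)
  have nuk: "nu_pow n k (s, i, j) = (s, n, j)" using nu_pow_eq_rot_row[OF n i] r xk by simp
  have lX: "lam \<in> Xc n m (s, n, j)" using x xk nuk by (simp add: F_dom_def)
  then have s: "\<not> s" using full_not_in_Xc_True_last_row[of lam m n j] full xk by auto
  have X: "lam \<in> Xset n m" using Xc_in_Xset[OF lX] .
  have xA: "x \<in> XZ_base n m" using X xk by simp
  have "(bar_step m ^^ e) (bar_step m x) \<notin> F_dom n m (False, i, j)"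
  proof (rule bar_step_pow_not_in_F_dom_False[OF n m _ bar_step_in_base[OF n xA]])
    show "(False, i, j) \<in> Delta_iso n m" using a by (simp add: mem_Delta_iso_iff)
    show "nu_pow n (snd (bar_step m x)) (False, i, j) = (False, 1, j)"
      using nu_pow_add_one[OF n a, of k] nuk s xk full by (simp add: bar_step_def)
    show "fst (bar_step m x) \<notin> Xc n m (False, 1, j)"
      using lam_bar_not_in_Xc_False_first_row[OF n X] xk full by (simp add: bar_step_def)
    have "0 < full_prefix m lam" using full_prefix_pos_iff[OF Xset_nonempty[OF n X]] full xk by simp
    then show "full_prefix m (fst (bar_step m x)) + 1 \<le> n"
      using full_prefix_bar_step[OF n m xA] full_prefix_le[OF xA] xk by simp
  qed simp
  then show ?thesis using s by (simp only: funpow_Suc_right comp_apply) simp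
qed

lemma bar_nf_F_step_bar_step_pow:
  assumes n: "0 < n" and m: "0 < m" and a: "(s, i, j) \<in> Delta_iso n m"
  shows "x \<in> F_dom n m (s, i, j) \<Longrightarrow> (bar_step m ^^ d) x \<in> F_dom n m (s, i, j) \<Longrightarrow>
    bar_nf n m (F_step n (s, i, j) x) = bar_nf n m (F_step n (s, i, j) ((bar_step m ^^ d) x))"
proof (induction d arbitrary: x)
  case (Suc d)
  let ?\<alpha> = "(s, i, j)"
  have eq: "(bar_step m ^^ Suc d) x = (bar_step m ^^ d) (bar_step m x)"
    by (simp only: funpow_Suc_right comp_apply)
  consider (fixed) "fst x ! 0 \<noteq> m" | (inner) "fst x ! 0 = m" "rot_row n i (snd x) < n"
    | (wrap) "fst x ! 0 = m" "rot_row n i (snd x) = n"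
    using rot_row_bounds[OF n, of i "snd x"] by linarith
  then show ?case
  proof cases
    case fixed
    then have "bar_step m x = x" by (simp add: bar_step_def)
    then show ?thesis using eq Suc by simp
  next
    case inner
    note step = F_step_bar_step[OF n a Suc.prems(1) inner]
    have "bar_nf n m (F_step n ?\<alpha> (bar_step m x)) = bar_nf n m (F_step n ?\<alpha> x)"
      using step bar_nf_bar_step[OF n m F_step_in_base[OF Suc.prems(1)]] by simp
    then show ?thesis using Suc.IH[of "bar_step m x"] step Suc.prems(2) unfolding eq by simp
  next
    case wrap
    then show ?thesis using bar_step_pow_wrap_not_in_F_dom[OF n m a Suc.prems(1)] Suc.prems(2) by blast
  qed
qed simp

lemma bar_nf_F_step_cong:
  assumes n: "0 < n" and m: "0 < m" and a: "\<alpha> \<in> Delta_iso n m"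
    and x: "x \<in> F_dom n m \<alpha>" and y: "y \<in> F_dom n m \<alpha>" and N: "bar_nf n m x = bar_nf n m y"
  shows "bar_nf n m (F_step n \<alpha> x) = bar_nf n m (F_step n \<alpha> y)"
proof -
  obtain s i j where al: "\<alpha> = (s, i, j)" by (cases \<alpha>)
  note chain = bar_nf_F_step_bar_step_pow[OF n m a[unfolded al]]
  show ?thesis
  proof (cases "full_prefix m (fst y) \<le> full_prefix m (fst x)")
    case True
    then show ?thesis
      using bar_nf_eq_imp_bar_step_pow[OF n m F_dom_in_base[OF x] F_dom_in_base[OF y] N]
        chain x y al by metis
  next
    case False
    then show ?thesis
      using bar_nf_eq_imp_bar_step_pow[OF n m F_dom_in_base[OF y] F_dom_in_base[OF x] N[symmetric]]
        chain x y al by (metis nat_le_linear)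
  qed
qed

definition Fmor :: "nat \<Rightarrow> nat \<Rightarrow> root \<Rightarrow> (nat list \<times> int) set \<Rightarrow> (nat list \<times> int) set" where
  "Fmor n m \<alpha> c = clsX n m (F_step n \<alpha> (SOME x. x \<in> c \<and> x \<in> F_dom n m \<alpha>))"

lemma Fmor_clsX:
  assumes n: "0 < n" and m: "0 < m" and a: "\<alpha> \<in> Delta_iso n m"
    and l: "lam \<in> Xc n m (nu_pow n j \<alpha>)"
  shows "Fmor n m \<alpha> (clsX n m (lam, j)) = clsX n m (t_op n (nu_pow n j \<alpha>) lam, j)"
proof -
  let ?x = "(lam, j)"
  have xM: "?x \<in> F_dom n m \<alpha>" using l by (simp add: F_dom_def)
  have xA: "?x \<in> XZ_base n m" using F_dom_in_base[OF xM] .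
  have "?x \<in> clsX n m ?x" using clsX_eq_bar_nf[OF n m xA] xA by simp
  then obtain y where y: "y \<in> clsX n m ?x" "y \<in> F_dom n m \<alpha>"
    and ys: "(SOME y. y \<in> clsX n m ?x \<and> y \<in> F_dom n m \<alpha>) = y"
    using xM someI[of "\<lambda>y. y \<in> clsX n m ?x \<and> y \<in> F_dom n m \<alpha>"] by blast
  have "bar_nf n m y = bar_nf n m ?x" using y(1) clsX_eq_bar_nf[OF n m xA] by simp
  then have "bar_nf n m (F_step n \<alpha> y) = bar_nf n m (F_step n \<alpha> ?x)"
    using bar_nf_F_step_cong[OF n m a y(2) xM] by simp
  then have "clsX n m (F_step n \<alpha> y) = clsX n m (F_step n \<alpha> ?x)"
    using clsX_eq_bar_nf[OF n m F_step_in_base[OF y(2)]] clsX_eq_bar_nf[OF n m F_step_in_base[OF xM]]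
    by simp
  then show ?thesis unfolding Fmor_def ys by (simp add: F_step_def)
qed

lemma clsX_in_XZ: "x \<in> XZ_base n m \<Longrightarrow> clsX n m x \<in> XZ n m"
  unfolding XZ_def clsX_def by (rule quotientI)

lemma Fobj_subset_XZ: "Fobj n m \<alpha> \<subseteq> XZ n m"
  unfolding Fobj_def using Xc_in_Xset clsX_in_XZ by blast

lemma Tiso_functor_Fmor:
  assumes n: "0 < n" and m: "0 < m"
  shows "Tiso_functor (Delta_iso n m) (XZ n m) (Fobj n m) (Fmor n m)"
proof (rule Tiso_functorI)
  show "\<forall>\<alpha>\<in>Delta_iso n m. neg_root \<alpha> \<in> Delta_iso n m" using neg_root_in_Delta_iso by blast
  show "\<forall>\<alpha>\<in>Delta_iso n m. Fobj n m \<alpha> \<subseteq> XZ n m" using Fobj_subset_XZ by blast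
  have step: "t_op n (nu_pow n j \<alpha>) lam \<in> Xc n m (nu_pow n j (neg_root \<alpha>)) \<and>
      Fmor n m (neg_root \<alpha>) (Fmor n m \<alpha> (clsX n m (lam, j))) = clsX n m (lam, j)"
    if a: "\<alpha> \<in> Delta_iso n m" and l: "lam \<in> Xc n m (nu_pow n j \<alpha>)" for \<alpha> lam j
  proof -
    have nn: "nu_pow n j (neg_root \<alpha>) = neg_root (nu_pow n j \<alpha>)" using nu_pow_neg_root[OF n a] .
    then have "t_op n (nu_pow n j \<alpha>) lam \<in> Xc n m (nu_pow n j (neg_root \<alpha>))" using t_op_Xc[OF l] by simp
    then show ?thesis
      using Fmor_clsX[OF n m a l] Fmor_clsX[OF n m neg_root_in_Delta_iso[OF a]] t_op_Xc[OF l] nn by simp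
  qed
  show "\<forall>\<alpha>\<in>Delta_iso n m. Fmor n m \<alpha> ` Fobj n m \<alpha> \<subseteq> Fobj n m (neg_root \<alpha>)"
    using step Fmor_clsX[OF n m] unfolding Fobj_def by fastforce
  show "\<forall>\<alpha>\<in>Delta_iso n m. \<forall>c\<in>Fobj n m \<alpha>. Fmor n m (neg_root \<alpha>) (Fmor n m \<alpha> c) = c"
    using step unfolding Fobj_def by blast
qed

section \<open>Shuffles and the map \<zeta>\<close>

declare upt_Suc [simp del]

definition pos :: "'a list \<Rightarrow> 'a \<Rightarrow> nat" where
  "pos xs x = length (takeWhile (\<lambda>y. y \<noteq> x) xs)"

lemma takeWhile_neq_eq_take_pos: "takeWhile (\<lambda>y. y \<noteq> x) xs = take (pos xs x) xs"
  unfolding pos_def by (rule takeWhile_eq_take)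

lemma pos_le_length: "pos xs x \<le> length xs"
  unfolding pos_def by (rule length_takeWhile_le)

lemma pos_less_length: "x \<in> set xs \<Longrightarrow> pos xs x < length xs"
  unfolding pos_def by (induction xs) auto

lemma nth_pos: "x \<in> set xs \<Longrightarrow> xs ! pos xs x = x"
  using nth_length_takeWhile[of "\<lambda>y. y \<noteq> x" xs] pos_less_length[of x xs] unfolding pos_def by blast

lemma pos_nth:
  assumes "distinct xs" "k < length xs"
  shows "pos xs (xs ! k) = k"
proof -
  have "takeWhile (\<lambda>y. y \<noteq> xs ! k) xs = take k xs"
    by (rule takeWhile_eq_take_P_nth) (use assms in \<open>auto simp: nth_eq_iff_index_eq\<close>)
  then show ?thesis unfolding pos_def using assms by simp
qed

lemma nth_eq_nth_filter:
  assumes p: "p < length xs" and P: "P (xs ! p)"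
  shows "length (filter P (take p xs)) < length (filter P xs) \<and>
    xs ! p = filter P xs ! length (filter P (take p xs))"
proof -
  have "xs = take p xs @ xs ! p # drop (Suc p) xs" using p by (simp add: id_take_nth_drop)
  then have "filter P xs = filter P (take p xs) @ xs ! p # filter P (drop (Suc p) xs)"
    using P by (metis filter.simps(2) filter_append)
  then show ?thesis by (simp add: nth_append)
qed

lemma distinct_if_distinct_filters:
  "distinct (filter P xs) \<Longrightarrow> distinct (filter (\<lambda>x. \<not> P x) xs) \<Longrightarrow> distinct xs"
  by (induction xs) (auto split: if_splits)

lemma list_eq_by_filters:
  "filter P s = filter P t \<Longrightarrow> filter (\<lambda>x. \<not> P x) s = filter (\<lambda>x. \<not> P x) t \<Longrightarrow>
    map P s = map P t \<Longrightarrow> s = t"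
proof (induction s arbitrary: t)
  case (Cons a s)
  then obtain b t' where t: "t = b # t'" by (cases t) auto
  then show ?case using Cons by (cases "P a") auto
qed simp

lemma shuffle_set_iff:
  "\<sigma> \<in> shuffle_set n m \<longleftrightarrow>
     filter isl \<sigma> = map Inl [1..<n+1] \<and> filter (\<lambda>x. \<not> isl x) \<sigma> = map Inr [1..<m+1]"
proof
  assume h: "filter isl \<sigma> = map Inl [1..<n+1] \<and> filter (\<lambda>x. \<not> isl x) \<sigma> = map Inr [1..<m+1]"
  have "distinct \<sigma>"
    using h distinct_if_distinct_filters[of isl \<sigma>] by (simp add: distinct_map)
  moreover have "set \<sigma> = set (filter isl \<sigma>) \<union> set (filter (\<lambda>x. \<not> isl x) \<sigma>)" by auto
  then have "set \<sigma> = Inl ` {1..<n+1} \<union> Inr ` {1..<m+1}" using h by (metis list.set_map set_upt)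
  then have "set \<sigma> = Iset n m" unfolding Iset_def by (simp add: atLeastLessThanSuc_atLeastAtMost)
  ultimately show "\<sigma> \<in> shuffle_set n m" using h by (simp add: shuffle_set_def)
qed (simp add: shuffle_set_def)

lemma shuffle_distinct: "\<sigma> \<in> shuffle_set n m \<Longrightarrow> distinct \<sigma>"
  by (simp add: shuffle_set_def)

lemma length_shuffle: "\<sigma> \<in> shuffle_set n m \<Longrightarrow> length \<sigma> = n + m"
  using sum_length_filter_compl[of isl \<sigma>] by (simp add: shuffle_set_iff)

lemma Inl_in_shuffle: "\<sigma> \<in> shuffle_set n m \<Longrightarrow> 1 \<le> i \<Longrightarrow> i \<le> n \<Longrightarrow> Inl i \<in> set \<sigma>"
  unfolding shuffle_set_def Iset_def by auto

definition n_unprimed :: "idx list \<Rightarrow> nat \<Rightarrow> nat" where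
  "n_unprimed \<sigma> p = length (filter isl (take p \<sigma>))"

definition n_primed :: "idx list \<Rightarrow> nat \<Rightarrow> nat" where
  "n_primed \<sigma> p = length (filter (\<lambda>x. \<not> isl x) (take p \<sigma>))"

definition row_len :: "idx list \<Rightarrow> nat \<Rightarrow> nat" where
  "row_len \<sigma> i = length (filter (\<lambda>x. \<not> isl x) (takeWhile (\<lambda>x. x \<noteq> Inl i) \<sigma>))"

lemma row_len_eq_n_primed: "row_len \<sigma> i = n_primed \<sigma> (pos \<sigma> (Inl i))"
  unfolding row_len_def n_primed_def using takeWhile_neq_eq_take_pos[of "Inl i" \<sigma>] by simp

lemma n_unprimed_add_n_primed: "p \<le> length \<sigma> \<Longrightarrow> n_unprimed \<sigma> p + n_primed \<sigma> p = p"
  unfolding n_unprimed_def n_primed_def using sum_length_filter_compl[of isl "take p \<sigma>"] by simp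

lemma length_filter_take_mono: "p \<le> q \<Longrightarrow> length (filter P (take p xs)) \<le> length (filter P (take q xs))"
  by (metis filter_append le_add1 le_add_diff_inverse length_append take_add)

lemma n_unprimed_mono: "p \<le> q \<Longrightarrow> n_unprimed \<sigma> p \<le> n_unprimed \<sigma> q"
  unfolding n_unprimed_def by (rule length_filter_take_mono)

lemma n_primed_mono: "p \<le> q \<Longrightarrow> n_primed \<sigma> p \<le> n_primed \<sigma> q"
  unfolding n_primed_def by (rule length_filter_take_mono)

lemma n_unprimed_Suc:
  "p < length \<sigma> \<Longrightarrow> n_unprimed \<sigma> (Suc p) = n_unprimed \<sigma> p + (if isl (\<sigma> ! p) then 1 else 0)"
  unfolding n_unprimed_def by (simp add: take_Suc_conv_app_nth)

lemma n_primed_Suc: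
  "p < length \<sigma> \<Longrightarrow> n_primed \<sigma> (Suc p) = n_primed \<sigma> p + (if isl (\<sigma> ! p) then 0 else 1)"
  unfolding n_primed_def by (simp add: take_Suc_conv_app_nth)

lemma n_primed_length: "\<sigma> \<in> shuffle_set n m \<Longrightarrow> n_primed \<sigma> (length \<sigma>) = m"
  unfolding n_primed_def by (simp add: shuffle_set_iff)

lemma nth_shuffle_isl:
  assumes "\<sigma> \<in> shuffle_set n m" "p < length \<sigma>" "isl (\<sigma> ! p)"
  shows "\<sigma> ! p = Inl (n_unprimed \<sigma> p + 1) \<and> n_unprimed \<sigma> p < n"
  using nth_eq_nth_filter[of p \<sigma> isl] assms by (simp add: shuffle_set_iff n_unprimed_def)

lemma nth_shuffle_not_isl:
  assumes "\<sigma> \<in> shuffle_set n m" "p < length \<sigma>" "\<not> isl (\<sigma> ! p)"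
  shows "\<sigma> ! p = Inr (n_primed \<sigma> p + 1) \<and> n_primed \<sigma> p < m"
  using nth_eq_nth_filter[of p \<sigma> "\<lambda>x. \<not> isl x"] assms by (simp add: shuffle_set_iff n_primed_def)

lemma pos_Inl:
  assumes S: "\<sigma> \<in> shuffle_set n m" and i: "1 \<le> i" "i \<le> n"
  shows "pos \<sigma> (Inl i) < length \<sigma>" "\<sigma> ! pos \<sigma> (Inl i) = Inl i"
    "n_unprimed \<sigma> (pos \<sigma> (Inl i)) = i - 1" "pos \<sigma> (Inl i) = row_len \<sigma> i + (i - 1)"
proof -
  let ?q = "pos \<sigma> (Inl i)"
  show q: "?q < length \<sigma>" "\<sigma> ! ?q = Inl i"
    using pos_less_length[OF Inl_in_shuffle[OF S i]] nth_pos[OF Inl_in_shuffle[OF S i]] by auto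
  then have "i = n_unprimed \<sigma> ?q + 1" using nth_shuffle_isl[OF S q(1)] by simp
  then show a: "n_unprimed \<sigma> ?q = i - 1" by simp
  show "?q = row_len \<sigma> i + (i - 1)"
    using n_unprimed_add_n_primed[of ?q \<sigma>] q(1) a row_len_eq_n_primed[of \<sigma> i] by simp
qed

lemma pos_Inl_mono:
  assumes S: "\<sigma> \<in> shuffle_set n m" and i: "1 \<le> i" "i < i'" "i' \<le> n"
  shows "pos \<sigma> (Inl i) < pos \<sigma> (Inl i')"
proof (rule ccontr)
  assume "\<not> ?thesis"
  then have "n_unprimed \<sigma> (pos \<sigma> (Inl i')) \<le> n_unprimed \<sigma> (pos \<sigma> (Inl i))" using n_unprimed_mono by simp
  then show False using pos_Inl(3)[OF S, of i] pos_Inl(3)[OF S, of i'] i by simp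
qed

lemma row_len_mono: "\<sigma> \<in> shuffle_set n m \<Longrightarrow> 1 \<le> i \<Longrightarrow> i < i' \<Longrightarrow> i' \<le> n \<Longrightarrow> row_len \<sigma> i \<le> row_len \<sigma> i'"
  unfolding row_len_eq_n_primed by (rule n_primed_mono, rule less_imp_le, rule pos_Inl_mono)

lemma row_len_le: "\<sigma> \<in> shuffle_set n m \<Longrightarrow> row_len \<sigma> i \<le> m"
  using n_primed_mono[OF pos_le_length[of \<sigma> "Inl i"], of \<sigma>] n_primed_length row_len_eq_n_primed
  by simp

lemma length_zeta: "length (zeta n \<sigma>) = n"
  by (simp add: zeta_def)

lemma nth_zeta: "k < n \<Longrightarrow> zeta n \<sigma> ! k = row_len \<sigma> (n - k)"
  by (simp add: zeta_def row_len_def)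

lemma zeta_row_len: "1 \<le> i \<Longrightarrow> i \<le> n \<Longrightarrow> zeta n \<sigma> ! (n - i) = row_len \<sigma> i"
  using nth_zeta[of "n - i" n \<sigma>] by simp

lemma zeta_in_Xset:
  assumes S: "\<sigma> \<in> shuffle_set n m"
  shows "zeta n \<sigma> \<in> Xset n m"
  unfolding Xset_iff_nth
proof (intro conjI allI impI)
  fix k assume "Suc k < n"
  then show "zeta n \<sigma> ! Suc k \<le> zeta n \<sigma> ! k"
    using row_len_mono[OF S, of "n - Suc k" "n - k"] by (simp add: nth_zeta)
qed (use row_len_le[OF S] in \<open>simp_all add: length_zeta nth_zeta\<close>)

lemma isl_nth_shuffle_iff:
  assumes S: "\<sigma> \<in> shuffle_set n m" and p: "p < length \<sigma>"
  shows "isl (\<sigma> ! p) \<longleftrightarrow> (\<exists>i. 1 \<le> i \<and> i \<le> n \<and> pos \<sigma> (Inl i) = p)"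
proof
  assume "isl (\<sigma> ! p)"
  then have e: "\<sigma> ! p = Inl (n_unprimed \<sigma> p + 1)" "n_unprimed \<sigma> p < n"
    using nth_shuffle_isl[OF S p] by auto
  then have "pos \<sigma> (Inl (n_unprimed \<sigma> p + 1)) = p" using pos_nth[OF shuffle_distinct[OF S] p] by simp
  then show "\<exists>i. 1 \<le> i \<and> i \<le> n \<and> pos \<sigma> (Inl i) = p" using e(2) by (intro exI[of _ "n_unprimed \<sigma> p + 1"]) auto
qed (use pos_Inl(2)[OF S] in force)

lemma zeta_inj_on: "inj_on (zeta n) (shuffle_set n m)"
proof (rule inj_onI)
  fix \<sigma> \<tau> assume S: "\<sigma> \<in> shuffle_set n m" and T: "\<tau> \<in> shuffle_set n m" and z: "zeta n \<sigma> = zeta n \<tau>"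
  have "pos \<sigma> (Inl i) = pos \<tau> (Inl i)" if "1 \<le> i" "i \<le> n" for i
    using zeta_row_len[OF that, of \<sigma>] zeta_row_len[OF that, of \<tau>] z pos_Inl(4)[OF S that]
      pos_Inl(4)[OF T that] by simp
  then have "map isl \<sigma> = map isl \<tau>"
    using length_shuffle[OF S] length_shuffle[OF T] isl_nth_shuffle_iff[OF S] isl_nth_shuffle_iff[OF T]
    by (intro nth_equalityI) auto
  moreover have "filter isl \<sigma> = filter isl \<tau>" "filter (\<lambda>x. \<not> isl x) \<sigma> = filter (\<lambda>x. \<not> isl x) \<tau>"
    using S T by (auto simp: shuffle_set_iff)
  ultimately show "\<sigma> = \<tau>" using list_eq_by_filters by blast
qed

lemma zeta_nth_0_eq_iff:
  assumes S: "\<sigma> \<in> shuffle_set n m" and n: "0 < n"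
  shows "zeta n \<sigma> ! 0 = m \<longleftrightarrow> last \<sigma> = Inl n"
proof -
  have l: "length \<sigma> = n + m" using length_shuffle[OF S] .
  have "\<sigma> \<noteq> []" using l n by auto
  then have last: "last \<sigma> = \<sigma> ! (n + m - 1)" using last_conv_nth[of \<sigma>] l by simp
  have q: "pos \<sigma> (Inl n) = row_len \<sigma> n + (n - 1)" using pos_Inl(4)[OF S, of n] n by simp
  have "zeta n \<sigma> ! 0 = m \<longleftrightarrow> pos \<sigma> (Inl n) = n + m - 1" using nth_zeta[OF n] q n by auto
  also have "\<dots> \<longleftrightarrow> last \<sigma> = Inl n"
    using last pos_Inl(2)[OF S, of n] pos_nth[OF shuffle_distinct[OF S], of "n + m - 1"] l n by force
  finally show ?thesis .
qed

lemma isl_nu_inv_idx [simp]: "isl (nu_inv_idx n x) = isl x"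
  by (cases x) auto

lemma filter_not_isl_map_nu_inv_idx:
  "filter (\<lambda>x. \<not> isl x) (map (nu_inv_idx n) xs) = filter (\<lambda>x. \<not> isl x) xs"
proof -
  have "\<not> isl x \<Longrightarrow> nu_inv_idx n x = x" for x by (cases x) auto
  then show ?thesis by (induction xs) auto
qed

lemma butlast_shuffle:
  assumes S: "\<sigma> \<in> shuffle_set n m" and n: "0 < n" and l: "last \<sigma> = Inl n"
  shows "\<sigma> = butlast \<sigma> @ [Inl n]" "filter isl (butlast \<sigma>) = map Inl [1..<n]"
    "filter (\<lambda>x. \<not> isl x) (butlast \<sigma>) = map Inr [1..<m+1]"
proof -
  have "\<sigma> \<noteq> []" using length_shuffle[OF S] n by auto
  then show sp: "\<sigma> = butlast \<sigma> @ [Inl n]" using append_butlast_last_id l by metis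
  have "filter isl (butlast \<sigma>) @ [Inl n] = map Inl [1..<n] @ [Inl n]"
    using arg_cong[OF sp, of "filter isl"] S n by (simp add: shuffle_set_iff upt_Suc)
  then show "filter isl (butlast \<sigma>) = map Inl [1..<n]" by simp
  show "filter (\<lambda>x. \<not> isl x) (butlast \<sigma>) = map Inr [1..<m+1]"
    using arg_cong[OF sp, of "filter (\<lambda>x. \<not> isl x)"] S by (simp add: shuffle_set_iff)
qed

lemma sigma_bar_in_shuffle_set:
  assumes S: "\<sigma> \<in> shuffle_set n m" and n: "0 < n" and l: "last \<sigma> = Inl n"
  shows "sigma_bar n \<sigma> \<in> shuffle_set n m"
proof -
  note split = butlast_shuffle[OF S n l]
  have "isl \<circ> nu_inv_idx n = isl" by auto
  then have fm: "filter isl (map (nu_inv_idx n) xs) = map (nu_inv_idx n) (filter isl xs)" for xs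
    by (simp add: filter_map)
  have "map (nu_inv_idx n) (map Inl [1..<n]) = map Inl (map Suc [1..<n])" by auto
  also have "\<dots> = map Inl [2..<n+1]" by (simp add: map_Suc_upt numeral_2_eq_2)
  finally have "filter isl (sigma_bar n \<sigma>) = map Inl [1..<n+1]"
    unfolding sigma_bar_def using split(2) n by (simp add: fm upt_conv_Cons numeral_2_eq_2)
  moreover have "filter (\<lambda>x. \<not> isl x) (sigma_bar n \<sigma>) = map Inr [1..<m+1]"
    unfolding sigma_bar_def using split(3) by (simp add: filter_not_isl_map_nu_inv_idx)
  ultimately show ?thesis by (simp add: shuffle_set_iff)
qed

lemma row_len_sigma_bar_Suc:
  assumes S: "\<sigma> \<in> shuffle_set n m" and n: "0 < n" and l: "last \<sigma> = Inl n" and i: "1 \<le> i" "i < n"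
  shows "row_len (sigma_bar n \<sigma>) (Suc i) = row_len \<sigma> i"
proof -
  note split = butlast_shuffle[OF S n l]
  let ?bl = "butlast \<sigma>"
  have setbl: "set ?bl \<subseteq> Iset n m" using S by (auto dest: in_set_butlastD simp: shuffle_set_def)
  have tw: "takeWhile ((\<lambda>y. y \<noteq> Inl (Suc i)) \<circ> nu_inv_idx n) ?bl = takeWhile (\<lambda>y. y \<noteq> Inl i) ?bl"
  proof (rule takeWhile_cong)
    fix x assume "x \<in> set ?bl"
    then have "x \<in> Iset n m" using setbl by blast
    then show "((\<lambda>y. y \<noteq> Inl (Suc i)) \<circ> nu_inv_idx n) x = (x \<noteq> Inl i)"
      using i unfolding Iset_def by (auto split: if_splits)
  qed simp
  have "Inl i \<in> set \<sigma>" using Inl_in_shuffle[OF S i(1)] i by simp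
  then have "Inl i \<in> set ?bl" using arg_cong[OF split(1), of set] i by simp
  then have tw2: "takeWhile (\<lambda>y. y \<noteq> Inl i) \<sigma> = takeWhile (\<lambda>y. y \<noteq> Inl i) ?bl"
    using split(1) takeWhile_append1[of "Inl i" ?bl "\<lambda>y. y \<noteq> Inl i" "[Inl n]"] by simp
  have "row_len (sigma_bar n \<sigma>) (Suc i) = length (filter (\<lambda>x. \<not> isl x)
      (map (nu_inv_idx n) (takeWhile ((\<lambda>y. y \<noteq> Inl (Suc i)) \<circ> nu_inv_idx n) ?bl)))"
    unfolding row_len_def sigma_bar_def using i by (simp add: takeWhile_map)
  also have "\<dots> = row_len \<sigma> i" unfolding tw filter_not_isl_map_nu_inv_idx row_len_def tw2 ..
  finally show ?thesis .
qed

lemma zeta_sigma_bar: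
  assumes S: "\<sigma> \<in> shuffle_set n m" and n: "0 < n" and l: "last \<sigma> = Inl n"
  shows "zeta n (sigma_bar n \<sigma>) = lam_bar (zeta n \<sigma>)"
proof (rule nth_equalityI)
  show "length (zeta n (sigma_bar n \<sigma>)) = length (lam_bar (zeta n \<sigma>))"
    using length_lam_bar[OF length_zeta n] by (simp add: length_zeta)
  fix k assume "k < length (zeta n (sigma_bar n \<sigma>))"
  then have k: "k < n" by (simp add: length_zeta)
  show "zeta n (sigma_bar n \<sigma>) ! k = lam_bar (zeta n \<sigma>) ! k"
  proof (cases "k < n - 1")
    case True
    then have e: "n - k = Suc (n - Suc k)" "1 \<le> n - Suc k" "n - Suc k < n" by auto
    show ?thesis using True k row_len_sigma_bar_Suc[OF S n l e(2,3)]
      by (simp add: nth_lam_bar[OF length_zeta n] nth_zeta e(1))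
  next
    case False
    then have "n - k = 1" using k by simp
    then show ?thesis using False k
      by (simp add: nth_lam_bar[OF length_zeta n] nth_zeta sigma_bar_def row_len_def)
  qed
qed

lemma imm_prec_split: "imm_prec \<sigma> u v \<Longrightarrow> \<exists>X Y. \<sigma> = X @ u # v # Y"
proof -
  assume "imm_prec \<sigma> u v"
  then obtain k where k: "k + 1 < length \<sigma>" "\<sigma> ! k = u" "\<sigma> ! (k + 1) = v" unfolding imm_prec_def by blast
  then have "\<sigma> = take k \<sigma> @ u # v # drop (Suc (Suc k)) \<sigma>"
    by (metis Cons_nth_drop_Suc Suc_eq_plus1 Suc_lessD append_take_drop_id)
  then show ?thesis by blast
qed

lemma imm_prec_Inl_InrD:
  assumes S: "\<sigma> \<in> shuffle_set n m" and i: "1 \<le> i" "i \<le> n" and imm: "imm_prec \<sigma> (Inl i) (Inr j)"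
  shows "j = row_len \<sigma> i + 1 \<and> (i < n \<longrightarrow> j \<le> row_len \<sigma> (Suc i))"
proof -
  obtain k where k: "k + 1 < length \<sigma>" "\<sigma> ! k = Inl i" "\<sigma> ! (k + 1) = Inr j"
    using imm unfolding imm_prec_def by blast
  have kq: "pos \<sigma> (Inl i) = k" using pos_nth[OF shuffle_distinct[OF S], of k] k by simp
  have b1: "n_primed \<sigma> (k + 1) = n_primed \<sigma> k" using n_primed_Suc[of k \<sigma>] k by simp
  have "\<sigma> ! (k + 1) = Inr (n_primed \<sigma> (k + 1) + 1)" using nth_shuffle_not_isl[OF S k(1)] k(3) by simp
  then have jv: "j = row_len \<sigma> i + 1" using k(3) b1 row_len_eq_n_primed[of \<sigma> i] kq by simp
  moreover have "j \<le> row_len \<sigma> (Suc i)" if "i < n"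
  proof -
    let ?q = "pos \<sigma> (Inl (Suc i))"
    have "k < ?q" using pos_Inl_mono[OF S i(1), of "Suc i"] that kq by simp
    moreover have "?q \<noteq> k + 1" using pos_Inl(2)[OF S, of "Suc i"] that k(3) by auto
    ultimately have "k + 2 \<le> ?q" by simp
    then have "n_primed \<sigma> (k + 2) \<le> n_primed \<sigma> ?q" by (rule n_primed_mono)
    moreover have "n_primed \<sigma> (k + 2) = n_primed \<sigma> (k + 1) + 1" using n_primed_Suc[of "k + 1" \<sigma>] k by simp
    ultimately show ?thesis using jv b1 row_len_eq_n_primed kq by simp
  qed
  ultimately show ?thesis by simp
qed

lemma imm_prec_Inl_InrI:
  assumes S: "\<sigma> \<in> shuffle_set n m" and i: "1 \<le> i" "i \<le> n" and j: "j \<le> m"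
    and jv: "j = row_len \<sigma> i + 1" and jn: "i < n \<longrightarrow> j \<le> row_len \<sigma> (Suc i)"
  shows "imm_prec \<sigma> (Inl i) (Inr j)"
proof -
  let ?k = "pos \<sigma> (Inl i)"
  have kl: "?k < length \<sigma>" and kn: "\<sigma> ! ?k = Inl i" and ka: "n_unprimed \<sigma> ?k = i - 1"
    using pos_Inl[OF S i] by auto
  have b: "n_primed \<sigma> (?k + 1) = row_len \<sigma> i"
    using n_primed_Suc[OF kl] kn row_len_eq_n_primed by simp
  have k1: "?k + 1 < length \<sigma>"
  proof (rule ccontr)
    assume "\<not> ?thesis"
    then have "n_primed \<sigma> (?k + 1) = m" using kl n_primed_length[OF S] by (metis Suc_eq_plus1 le_neq_implies_less Suc_leI)
    then show False using b jv j by simp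
  qed
  have "\<not> isl (\<sigma> ! (?k + 1))"
  proof
    assume isl: "isl (\<sigma> ! (?k + 1))"
    have "n_unprimed \<sigma> (?k + 1) = i" using n_unprimed_Suc[OF kl] kn ka i by simp
    then have e: "\<sigma> ! (?k + 1) = Inl (Suc i)" "i < n" using nth_shuffle_isl[OF S k1] isl by auto
    then have "pos \<sigma> (Inl (Suc i)) = ?k + 1" using pos_nth[OF shuffle_distinct[OF S] k1] by simp
    then have "row_len \<sigma> (Suc i) = row_len \<sigma> i" using b row_len_eq_n_primed by simp
    then show False using jv jn e(2) by simp
  qed
  then have "\<sigma> ! (?k + 1) = Inr j" using nth_shuffle_not_isl[OF S k1] b jv by simp
  then show ?thesis unfolding imm_prec_def using k1 kn by blast
qed

lemma imm_prec_Inr_InlD: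
  assumes S: "\<sigma> \<in> shuffle_set n m" and i: "1 \<le> i" "i \<le> n" and imm: "imm_prec \<sigma> (Inr j) (Inl i)"
  shows "j = row_len \<sigma> i \<and> (1 < i \<longrightarrow> row_len \<sigma> (i - 1) < j)"
proof -
  obtain k where k: "k + 1 < length \<sigma>" "\<sigma> ! k = Inr j" "\<sigma> ! (k + 1) = Inl i"
    using imm unfolding imm_prec_def by blast
  have kl: "k < length \<sigma>" using k by simp
  have kq: "pos \<sigma> (Inl i) = k + 1" using pos_nth[OF shuffle_distinct[OF S], of "k + 1"] k by simp
  have b1: "n_primed \<sigma> (k + 1) = n_primed \<sigma> k + 1" using n_primed_Suc[OF kl] k by simp
  have "\<sigma> ! k = Inr (n_primed \<sigma> k + 1)" using nth_shuffle_not_isl[OF S kl] k(2) by simp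
  then have jv: "j = row_len \<sigma> i" using k(2) b1 row_len_eq_n_primed[of \<sigma> i] kq by simp
  moreover have "row_len \<sigma> (i - 1) < j" if "1 < i"
  proof -
    let ?q = "pos \<sigma> (Inl (i - 1))"
    have "?q < k + 1" using pos_Inl_mono[OF S, of "i - 1" i] that i kq by simp
    moreover have "\<sigma> ! ?q = Inl (i - 1)" using pos_Inl(2)[OF S, of "i - 1"] that i by simp
    then have "?q \<noteq> k" using k(2) by auto
    ultimately have "n_primed \<sigma> ?q \<le> n_primed \<sigma> k" by (intro n_primed_mono) simp
    then show ?thesis using jv b1 row_len_eq_n_primed[of \<sigma>] kq by simp
  qed
  ultimately show ?thesis by simp
qed

lemma imm_prec_Inr_InlI:
  assumes S: "\<sigma> \<in> shuffle_set n m" and i: "1 \<le> i" "i \<le> n" and j: "1 \<le> j"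
    and jv: "j = row_len \<sigma> i" and jn: "1 < i \<longrightarrow> row_len \<sigma> (i - 1) < j"
  shows "imm_prec \<sigma> (Inr j) (Inl i)"
proof -
  let ?K = "pos \<sigma> (Inl i)"
  have Kl: "?K < length \<sigma>" and Kn: "\<sigma> ! ?K = Inl i" and Ka: "n_unprimed \<sigma> ?K = i - 1"
    using pos_Inl[OF S i] by auto
  have bK: "n_primed \<sigma> ?K = j" using row_len_eq_n_primed jv by simp
  then have "?K \<noteq> 0" using j by (metis n_primed_def take0 filter.simps(1) list.size(3) not_one_le_zero)
  then obtain k where kK: "?K = Suc k" using not0_implies_Suc by blast
  have kl: "k < length \<sigma>" using Kl kK by simp
  have "\<not> isl (\<sigma> ! k)"
  proof
    assume isl: "isl (\<sigma> ! k)"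
    have e: "\<sigma> ! k = Inl (n_unprimed \<sigma> k + 1)" using nth_shuffle_isl[OF S kl] isl by simp
    have "n_unprimed \<sigma> ?K = n_unprimed \<sigma> k + 1" using n_unprimed_Suc[OF kl] isl kK by simp
    then have i2: "1 < i" "n_unprimed \<sigma> k + 1 = i - 1" using Ka by auto
    then have "pos \<sigma> (Inl (i - 1)) = k" using pos_nth[OF shuffle_distinct[OF S] kl] e by simp
    then have "row_len \<sigma> (i - 1) = n_primed \<sigma> ?K"
      using row_len_eq_n_primed n_primed_Suc[OF kl] isl kK by simp
    then show False using jn i2 bK by simp
  qed
  then have "\<sigma> ! k = Inr j" using nth_shuffle_not_isl[OF S kl] n_primed_Suc[OF kl] kK bK by simp
  then show ?thesis unfolding imm_prec_def using Kl Kn kK by (metis Suc_eq_plus1)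
qed

lemma zeta_in_Xc_True_iff:
  assumes S: "\<sigma> \<in> shuffle_set n m" and i: "1 \<le> i" "i \<le> n" and j: "1 \<le> j" "j \<le> m"
  shows "zeta n \<sigma> \<in> Xc n m (True, i, j) \<longleftrightarrow> imm_prec \<sigma> (Inl i) (Inr j)"
proof -
  have "zeta n \<sigma> ! (n - i - 1) = row_len \<sigma> (Suc i)" if "i < n"
    using zeta_row_len[of "Suc i" n \<sigma>] that by (simp add: Suc_diff_Suc)
  then show ?thesis
    using zeta_row_len[OF i] zeta_in_Xset[OF S] i j
      imm_prec_Inl_InrD[OF S i] imm_prec_Inl_InrI[OF S i j(2)] unfolding Xc_True_iff by auto
qed

lemma zeta_in_Xc_False_iff:
  assumes S: "\<sigma> \<in> shuffle_set n m" and i: "1 \<le> i" "i \<le> n" and j: "1 \<le> j" "j \<le> m"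
  shows "zeta n \<sigma> \<in> Xc n m (False, i, j) \<longleftrightarrow> imm_prec \<sigma> (Inr j) (Inl i)"
proof -
  have "zeta n \<sigma> ! (n - i + 1) = row_len \<sigma> (i - 1)" if "1 < i"
  proof -
    have "n - i + 1 = n - (i - 1)" "1 \<le> i - 1" "i - 1 \<le> n" using i that by auto
    then show ?thesis using zeta_row_len[of "i - 1" n \<sigma>] by simp
  qed
  then show ?thesis
    using zeta_row_len[OF i] zeta_in_Xset[OF S] i j
      imm_prec_Inr_InlD[OF S i] imm_prec_Inr_InlI[OF S i j(1)] unfolding Xc_False_iff by auto
qed

lemma swap_ij_adjacent:
  assumes d: "distinct (X @ a # b # Y)" and ab: "(a = Inl i \<and> b = Inr j) \<or> (a = Inr j \<and> b = Inl i)"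
  shows "swap_ij i j (X @ a # b # Y) = X @ b # a # Y"
proof -
  let ?f = "\<lambda>x. if x = Inl i then Inr j else if x = Inr j then Inl i else x"
  have "\<forall>x\<in>set X. ?f x = x" "\<forall>x\<in>set Y. ?f x = x" using d ab by auto
  then have "map ?f X = X" "map ?f Y = Y" by (simp_all add: map_idI)
  then show ?thesis unfolding swap_ij_def using ab by auto
qed

lemma swap_adjacent_in_shuffle_set:
  "X @ a # b # Y \<in> shuffle_set n m \<Longrightarrow> isl a \<noteq> isl b \<Longrightarrow> X @ b # a # Y \<in> shuffle_set n m"
  unfolding shuffle_set_iff by (cases "isl a") auto

lemma row_len_swap_other:
  assumes "Inl i' \<noteq> a" "Inl i' \<noteq> b"
  shows "row_len (X @ b # a # Y) i' = row_len (X @ a # b # Y) i'"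
proof (cases "\<forall>x\<in>set X. x \<noteq> Inl i'")
  case True
  then show ?thesis unfolding row_len_def using assms by (simp add: takeWhile_append2)
next
  case False
  then show ?thesis unfolding row_len_def by (auto simp: takeWhile_append1)
qed

lemma row_len_prefix: "Inl i \<notin> set X \<Longrightarrow> row_len (X @ Inl i # Y) i = length (filter (\<lambda>x. \<not> isl x) X)"
  unfolding row_len_def by (subst takeWhile_append2) auto

lemma row_len_prefix_Inr: "Inl i \<notin> set X \<Longrightarrow> row_len (X @ Inr j # Inl i # Y) i = length (filter (\<lambda>x. \<not> isl x) X) + 1"
  unfolding row_len_def by (subst takeWhile_append2) auto

lemma zeta_eq_list_update:
  assumes i: "1 \<le> i" "i \<le> n" and other: "\<And>i'. i' \<noteq> i \<Longrightarrow> row_len \<tau> i' = row_len \<sigma> i'"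
  shows "zeta n \<tau> = (zeta n \<sigma>)[n - i := row_len \<tau> i]"
proof (rule nth_equalityI)
  show "length (zeta n \<tau>) = length ((zeta n \<sigma>)[n - i := row_len \<tau> i])" by (simp add: length_zeta)
  fix k assume "k < length (zeta n \<tau>)"
  then have k: "k < n" by (simp add: length_zeta)
  then show "zeta n \<tau> ! k = (zeta n \<sigma>)[n - i := row_len \<tau> i] ! k"
    using i other[of "n - k"] by (cases "k = n - i") (auto simp: length_zeta nth_zeta)
qed

lemma zeta_swap_ij:
  assumes S: "\<sigma> \<in> shuffle_set n m" and i: "1 \<le> i" "i \<le> n" and j: "1 \<le> j" "j \<le> m"
    and X: "zeta n \<sigma> \<in> Xc n m (s, i, j)"
  shows "swap_ij i j \<sigma> \<in> shuffle_set n m \<and> zeta n (swap_ij i j \<sigma>) = t_op n (s, i, j) (zeta n \<sigma>)"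
proof -
  let ?a = "if s then Inl i else Inr j" and ?b = "if s then Inr j else Inl i"
  have "imm_prec \<sigma> ?a ?b"
    using X zeta_in_Xc_True_iff[OF S i j] zeta_in_Xc_False_iff[OF S i j] by (cases s) auto
  then obtain A B where \<sigma>: "\<sigma> = A @ ?a # ?b # B" using imm_prec_split by blast
  let ?\<tau> = "A @ ?b # ?a # B"
  have d: "distinct (A @ ?a # ?b # B)" using shuffle_distinct[OF S] \<sigma> by simp
  have sw: "swap_ij i j \<sigma> = ?\<tau>" using swap_ij_adjacent[OF d] \<sigma> by simp
  have T: "?\<tau> \<in> shuffle_set n m" using swap_adjacent_in_shuffle_set[of A ?a ?b B] S \<sigma> by simp
  have "Inl i \<notin> set A" using d by (cases s) auto
  then have "row_len ?\<tau> i = (if s then row_len \<sigma> i + 1 else row_len \<sigma> i - 1)"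
    using row_len_prefix row_len_prefix_Inr \<sigma> by (cases s) auto
  moreover have "row_len ?\<tau> i' = row_len \<sigma> i'" if "i' \<noteq> i" for i'
    using row_len_swap_other[of i' ?a ?b A B] that \<sigma> by (cases s) auto
  ultimately have "zeta n ?\<tau> = t_op n (s, i, j) (zeta n \<sigma>)"
    using zeta_eq_list_update[OF i, of ?\<tau> \<sigma>] zeta_row_len[OF i, of \<sigma>] by (cases s) auto
  then show ?thesis using sw T by simp
qed

lemma sum_list_list_update: "k < length xs \<Longrightarrow> sum_list (xs[k := v]) + xs ! k = sum_list xs + (v::nat)"
  by (induction xs arbitrary: k) (auto split: nat.splits)

definition base_shuffle :: "nat \<Rightarrow> nat \<Rightarrow> idx list" where
  "base_shuffle n m = map Inl [1..<n+1] @ map Inr [1..<m+1]"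

lemma base_shuffle_in_shuffle_set: "base_shuffle n m \<in> shuffle_set n m"
  unfolding shuffle_set_iff base_shuffle_def by (simp add: filter_map o_def)

lemma zeta_base_shuffle: "zeta n (base_shuffle n m) = replicate n 0"
proof -
  have "row_len (base_shuffle n m) i = 0" if "1 \<le> i" "i \<le> n" for i
  proof -
    have "Inl i \<in> set (map Inl [1..<n+1])" using that by auto
    then have "takeWhile (\<lambda>x. x \<noteq> Inl i) (base_shuffle n m) =
        takeWhile (\<lambda>x. x \<noteq> Inl i) (map Inl [1..<n+1])"
      unfolding base_shuffle_def by (rule takeWhile_append1) simp
    moreover have "isl x" if "x \<in> set (takeWhile (\<lambda>x. x \<noteq> Inl i) (map Inl [1..<n+1]))" for x
      using set_takeWhileD[OF that] by auto
    ultimately show ?thesis unfolding row_len_def by (simp add: filter_empty_conv) blast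
  qed
  then show ?thesis by (intro nth_equalityI) (auto simp: length_zeta nth_zeta)
qed

lemma Xset_removable_box:
  assumes X: "lam \<in> Xset n m" and nz: "sum_list lam \<noteq> 0"
  obtains i j where "1 \<le> i" "i \<le> n" "1 \<le> j" "j \<le> m" "lam \<in> Xc n m (False, i, j)"
proof -
  have ln: "length lam = n" using length_Xset[OF X] .
  let ?A = "{k. k < n \<and> 0 < lam ! k}"
  have "?A \<noteq> {}" using nz ln by (auto simp: in_set_conv_nth sum_list_eq_0_iff)
  then have KA: "Max ?A \<in> ?A" and Kmax: "\<And>k'. Max ?A < k' \<Longrightarrow> k' < n \<Longrightarrow> lam ! k' = 0"
    using Max_in[of ?A] Max_ge[of ?A] by (auto simp: not_less[symmetric])
  define i where "i = n - Max ?A"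
  define j where "j = lam ! Max ?A"
  have i: "1 \<le> i" "i \<le> n" "n - i = Max ?A" using KA i_def by auto
  have j: "1 \<le> j" "j \<le> m" using KA j_def X unfolding Xset_iff_nth by auto
  have "lam ! (n - i + 1) < j" if "1 < i" using Kmax[of "n - i + 1"] i that j by simp
  then have "lam \<in> Xc n m (False, i, j)" using X i j j_def unfolding Xc_False_iff by simp
  then show ?thesis using that i j by blast
qed

lemma zeta_surj:
  assumes n: "0 < n"
  shows "lam \<in> Xset n m \<Longrightarrow> \<exists>\<sigma>\<in>shuffle_set n m. zeta n \<sigma> = lam"
proof (induction "sum_list lam" arbitrary: lam rule: less_induct)
  case less
  show ?case
  proof (cases "sum_list lam = 0")
    case True
    then have "lam = replicate n 0"
      using length_Xset[OF less.prems] by (simp add: sum_list_eq_0_iff replicate_eqI)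
    then show ?thesis using zeta_base_shuffle base_shuffle_in_shuffle_set by blast
  next
    case False
    then obtain i j where i: "1 \<le> i" "i \<le> n" and j: "1 \<le> j" "j \<le> m"
      and lF: "lam \<in> Xc n m (False, i, j)" using Xset_removable_box less.prems by blast
    let ?lam' = "t_op n (False, i, j) lam"
    have l': "?lam' \<in> Xc n m (True, i, j)" "t_op n (True, i, j) ?lam' = lam" using t_op_Xc[OF lF] by auto
    have jv: "j = lam ! (n - i)" using lF unfolding Xc_False_iff by simp
    have "sum_list ?lam' + lam ! (n - i) = sum_list lam + (j - 1)"
      using sum_list_list_update[of "n - i" lam "j - 1"] i n length_Xset[OF less.prems] jv by simp
    then have "sum_list ?lam' < sum_list lam" using j jv by arith
    then obtain \<sigma>' where S': "\<sigma>' \<in> shuffle_set n m" and z': "zeta n \<sigma>' = ?lam'"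
      using less.hyps Xc_in_Xset[OF l'(1)] by blast
    then show ?thesis using zeta_swap_ij[OF S' i j, of True] l' by auto
  qed
qed

lemma bij_betw_zeta: "0 < n \<Longrightarrow> bij_betw (zeta n) (shuffle_set n m) (Xset n m)"
  unfolding bij_betw_def using zeta_inj_on zeta_in_Xset zeta_surj by blast

section \<open>Borel subalgebras\<close>

lemma set_take_eq_pos_less:
  assumes d: "distinct xs" and c: "c \<le> length xs"
  shows "{v \<in> set xs. pos xs v < c} = set (take c xs)"
proof
  show "{v \<in> set xs. pos xs v < c} \<subseteq> set (take c xs)"
  proof clarify
    fix v assume v: "v \<in> set xs" "pos xs v < c"
    then show "v \<in> set (take c xs)"
      using nth_pos[OF v(1)] pos_less_length[OF v(1)] c
      by (metis in_set_conv_nth length_take min.absorb4 nth_take min_less_iff_conj)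
  qed
  show "set (take c xs) \<subseteq> {v \<in> set xs. pos xs v < c}"
  proof
    fix v assume "v \<in> set (take c xs)"
    then obtain k where k: "k < c" "k < length xs" "xs ! k = v" by (auto simp: in_set_conv_nth)
    then show "v \<in> {v \<in> set xs. pos xs v < c}" using pos_nth[OF d k(2)] by auto
  qed
qed

lemma card_pos_less:
  assumes "distinct xs" "u \<in> set xs"
  shows "card {v \<in> set xs. pos xs v < pos xs u} = pos xs u"
  using set_take_eq_pos_less[OF assms(1) pos_le_length] distinct_card[OF distinct_take[OF assms(1)]]
    pos_le_length[of xs u] by simp

lemma list_eq_by_pos_order:
  assumes ds: "distinct s" and dt: "distinct t" and st: "set s = set t"
    and order: "\<forall>u\<in>set s. \<forall>v\<in>set s. pos s v < pos s u \<longleftrightarrow> pos t v < pos t u"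
  shows "s = t"
proof -
  have eq: "pos s u = pos t u" if u: "u \<in> set s" for u
  proof -
    have "{v \<in> set s. pos s v < pos s u} = {v \<in> set t. pos t v < pos t u}" using order u st by auto
    then show ?thesis using card_pos_less[OF ds u] card_pos_less[OF dt] u st by metis
  qed
  show ?thesis
  proof (rule nth_equalityI)
    show "length s = length t" using distinct_card[OF ds] distinct_card[OF dt] st by simp
    fix k assume k: "k < length s"
    then have "pos t (s ! k) = k" using eq[of "s ! k"] pos_nth[OF ds k] by simp
    then show "s ! k = t ! k" using nth_pos[of "s ! k" t] k st by (metis nth_mem)
  qed
qed

lemma precedes_iff_pos_less:
  assumes d: "distinct xs" and u: "u \<in> set xs" and v: "v \<in> set xs"
  shows "precedes xs u v \<longleftrightarrow> pos xs u < pos xs v"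
proof
  assume "precedes xs u v"
  then obtain k l where "k < l" "l < length xs" "xs ! k = u" "xs ! l = v" unfolding precedes_def by blast
  then show "pos xs u < pos xs v" using pos_nth[OF d, of k] pos_nth[OF d, of l] by simp
next
  assume "pos xs u < pos xs v"
  then show "precedes xs u v"
    unfolding precedes_def using pos_less_length[OF v] nth_pos[OF u] nth_pos[OF v] by blast
qed

text \<open>The elementary matrix E_vu lies in borel \<sigma> exactly when v = u or v comes before u in \<sigma>.\<close>

lemma borel_inj:
  assumes d: "distinct \<sigma>" "distinct \<tau>" and st: "set \<sigma> = set \<tau>" and b: "borel \<sigma> = borel \<tau>"
  shows "\<sigma> = \<tau>"
proof (rule list_eq_by_pos_order[OF d st], intro ballI)
  fix u v assume u: "u \<in> set \<sigma>" and v: "v \<in> set \<sigma>"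
  have E: "(\<lambda>a b. if a = v \<and> b = u then (1::complex) else 0) \<in> borel xs \<longleftrightarrow>
      v \<in> set xs \<and> u \<in> set xs \<and> (v = u \<or> precedes xs v u)" for xs
    unfolding borel_def by auto
  show "pos \<sigma> v < pos \<sigma> u \<longleftrightarrow> pos \<tau> v < pos \<tau> u"
  proof (cases "u = v")
    case False
    then have "precedes \<sigma> v u \<longleftrightarrow> precedes \<tau> v u" using E[of \<sigma>] E[of \<tau>] b u v st by auto
    then show ?thesis
      using precedes_iff_pos_less[OF d(1) v u] precedes_iff_pos_less[OF d(2), of v u] u v st by simp
  qed simp
qed

lemma borel_inj_on: "inj_on borel (shuffle_set n m)"
  by (rule inj_onI) (auto intro: borel_inj simp: shuffle_set_def)

lemma r_op_borel:
  assumes S: "\<sigma> \<in> shuffle_set n m"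
  shows "r_op n m (s, i, j) (borel \<sigma>) = borel (swap_ij i j \<sigma>)"
  unfolding r_op.simps
proof (rule the_equality)
  fix b' assume "\<exists>\<tau>\<in>shuffle_set n m. borel \<sigma> = borel \<tau> \<and> b' = borel (swap_ij i j \<tau>)"
  then show "b' = borel (swap_ij i j \<sigma>)" using inj_onD[OF borel_inj_on] S by metis
qed (use S in blast)

section \<open>Transport to [B\<degree> \<times> Z]\<close>

definition shuffle_of :: "nat \<Rightarrow> nat \<Rightarrow> nat list \<Rightarrow> idx list" where
  "shuffle_of n m = inv_into (shuffle_set n m) (zeta n)"

lemma shuffle_of_in_shuffle_set: "0 < n \<Longrightarrow> lam \<in> Xset n m \<Longrightarrow> shuffle_of n m lam \<in> shuffle_set n m"
  unfolding shuffle_of_def using bij_betw_zeta[of n m] by (metis bij_betw_def inv_into_into)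

lemma zeta_shuffle_of: "0 < n \<Longrightarrow> lam \<in> Xset n m \<Longrightarrow> zeta n (shuffle_of n m lam) = lam"
  unfolding shuffle_of_def using bij_betw_zeta[of n m] by (metis bij_betw_inv_into_right)

lemma shuffle_of_zeta: "0 < n \<Longrightarrow> \<sigma> \<in> shuffle_set n m \<Longrightarrow> shuffle_of n m (zeta n \<sigma>) = \<sigma>"
  unfolding shuffle_of_def using bij_betw_zeta[of n m] by (simp add: bij_betw_def inv_into_f_f)

definition borel_of :: "nat \<Rightarrow> nat \<Rightarrow> nat list \<Rightarrow> mat set" where
  "borel_of n m lam = borel (shuffle_of n m lam)"

abbreviation borel_pair :: "nat \<Rightarrow> nat \<Rightarrow> nat list \<times> int \<Rightarrow> mat set \<times> int" where
  "borel_pair n m \<equiv> map_prod (borel_of n m) id"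

lemma borel_of_zeta: "0 < n \<Longrightarrow> \<sigma> \<in> shuffle_set n m \<Longrightarrow> borel_of n m (zeta n \<sigma>) = borel \<sigma>"
  by (simp add: borel_of_def shuffle_of_zeta)

lemma inj_on_borel_pair: assumes n: "0 < n" shows "inj_on (borel_pair n m) (XZ_base n m)"
proof -
  have "inj_on (borel_of n m) (Xset n m)"
  proof (rule inj_onI)
    fix a b assume a: "a \<in> Xset n m" and b: "b \<in> Xset n m" and e: "borel_of n m a = borel_of n m b"
    then have "shuffle_of n m a = shuffle_of n m b"
      using inj_onD[OF borel_inj_on] shuffle_of_in_shuffle_set[OF n a] shuffle_of_in_shuffle_set[OF n b] unfolding borel_of_def by blast
    then show "a = b" using zeta_shuffle_of[OF n a] zeta_shuffle_of[OF n b] by metis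
  qed
  then show ?thesis by (auto simp: inj_on_def)
qed

lemma borel_pair_image: assumes n: "0 < n" shows "borel_pair n m ` XZ_base n m = Bset n m \<times> UNIV"
proof -
  have "borel_of n m ` Xset n m = Bset n m"
  proof
    show "borel_of n m ` Xset n m \<subseteq> Bset n m"
      unfolding Bset_def borel_of_def using shuffle_of_in_shuffle_set[OF n] by auto
    show "Bset n m \<subseteq> borel_of n m ` Xset n m"
      unfolding Bset_def using borel_of_zeta[OF n] zeta_in_Xset by (metis image_subset_iff rev_image_eqI)
  qed
  then show ?thesis by (simp add: map_prod_surj_on)
qed

definition BZ_gen :: "nat \<Rightarrow> nat \<Rightarrow> ((mat set \<times> int) \<times> (mat set \<times> int)) set" where
  "BZ_gen n m = {((borel \<sigma>, k), (borel (sigma_bar n \<sigma>), k + 1)) | \<sigma> k.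
     \<sigma> \<in> shuffle_set n m \<and> last \<sigma> = Inl n}"

lemma BZ_gen_eq_image:
  assumes n: "0 < n"
  shows "BZ_gen n m = map_prod (borel_pair n m) (borel_pair n m) ` XZ_gen n m"
proof
  show "BZ_gen n m \<subseteq> map_prod (borel_pair n m) (borel_pair n m) ` XZ_gen n m"
  proof
    fix p assume "p \<in> BZ_gen n m"
    then obtain \<sigma> k where p: "p = ((borel \<sigma>, k), (borel (sigma_bar n \<sigma>), k + 1))"
      and S: "\<sigma> \<in> shuffle_set n m" and l: "last \<sigma> = Inl n" unfolding BZ_gen_def by blast
    let ?lam = "zeta n \<sigma>"
    have "((?lam, k), (lam_bar ?lam, k + 1)) \<in> XZ_gen n m"
      unfolding XZ_gen_def using zeta_in_Xset[OF S] zeta_nth_0_eq_iff[OF S n] l by blast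
    moreover have "map_prod (borel_pair n m) (borel_pair n m) ((?lam, k), (lam_bar ?lam, k + 1)) = p"
      using p borel_of_zeta[OF n S] borel_of_zeta[OF n sigma_bar_in_shuffle_set[OF S n l]]
        zeta_sigma_bar[OF S n l] by simp
    ultimately show "p \<in> map_prod (borel_pair n m) (borel_pair n m) ` XZ_gen n m" by force
  qed
  show "map_prod (borel_pair n m) (borel_pair n m) ` XZ_gen n m \<subseteq> BZ_gen n m"
  proof
    fix p assume "p \<in> map_prod (borel_pair n m) (borel_pair n m) ` XZ_gen n m"
    then obtain lam k where p: "p = ((borel_of n m lam, k), (borel_of n m (lam_bar lam), k + 1))"
      and X: "lam \<in> Xset n m" and full: "lam ! 0 = m" unfolding XZ_gen_def by auto
    let ?\<sigma> = "shuffle_of n m lam"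
    have S: "?\<sigma> \<in> shuffle_set n m" using shuffle_of_in_shuffle_set[OF n X] .
    have z: "zeta n ?\<sigma> = lam" using zeta_shuffle_of[OF n X] .
    have l: "last ?\<sigma> = Inl n" using zeta_nth_0_eq_iff[OF S n] z full by simp
    have "borel_of n m (lam_bar lam) = borel (sigma_bar n ?\<sigma>)"
      using borel_of_zeta[OF n sigma_bar_in_shuffle_set[OF S n l]] zeta_sigma_bar[OF S n l] z by simp
    then show "p \<in> BZ_gen n m" unfolding BZ_gen_def using S l p by (auto simp: borel_of_def)
  qed
qed

lemma BZ_rel_eq_image:
  assumes n: "0 < n"
  shows "BZ_rel n m = map_prod (borel_pair n m) (borel_pair n m) ` XZ_rel n m"
proof -
  have "BZ_rel n m = eqcl (Bset n m \<times> UNIV) (BZ_gen n m)" unfolding BZ_rel_def BZ_gen_def ..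
  also have "\<dots> = eqcl (borel_pair n m ` XZ_base n m) (map_prod (borel_pair n m) (borel_pair n m) ` XZ_gen n m)"
    using borel_pair_image[OF n] BZ_gen_eq_image[OF n] by simp
  also have "\<dots> = map_prod (borel_pair n m) (borel_pair n m) ` XZ_rel n m"
    unfolding XZ_rel_eq_eqcl_gen by (rule eqcl_map_prod_image[OF inj_on_borel_pair[OF n] XZ_gen_subset[OF n]])
  finally show ?thesis .
qed

lemma clsB_borel_pair:
  assumes n: "0 < n" and m: "0 < m" and x: "x \<in> XZ_base n m"
  shows "clsB n m (borel_pair n m x) = borel_pair n m ` clsX n m x"
proof -
  have "XZ_rel n m \<subseteq> XZ_base n m \<times> XZ_base n m" using XZ_rel_eq_bar_nf[OF n m] by auto
  then have "(x', y) \<in> XZ_rel n m \<Longrightarrow> borel_pair n m x' = borel_pair n m x \<Longrightarrow> x' = x" for x' y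
    using inj_onD[OF inj_on_borel_pair[OF n]] x by blast
  then show ?thesis unfolding clsB_def clsX_def BZ_rel_eq_image[OF n] by force
qed

definition Phi :: "nat \<Rightarrow> nat \<Rightarrow> (nat list \<times> int) set \<Rightarrow> (mat set \<times> int) set" where
  "Phi n m c = borel_pair n m ` c"

lemma Phi_clsX: "0 < n \<Longrightarrow> 0 < m \<Longrightarrow> x \<in> XZ_base n m \<Longrightarrow> Phi n m (clsX n m x) = clsB n m (borel_pair n m x)"
  unfolding Phi_def using clsB_borel_pair by simp

lemma bij_betw_Phi:
  assumes n: "0 < n" and m: "0 < m"
  shows "bij_betw (Phi n m) (XZ n m) (BZ n m)"
proof -
  have XZ: "XZ n m = clsX n m ` XZ_base n m" and BZ: "BZ n m = clsB n m ` (Bset n m \<times> UNIV)"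
    unfolding XZ_def BZ_def quotient_def clsX_def clsB_def by auto
  have "inj_on (Phi n m) (XZ n m)"
    using inj_on_image_eq_iff[OF inj_on_borel_pair[OF n]] clsX_eq_bar_nf[OF n m]
    unfolding XZ Phi_def inj_on_def by (smt (verit, ccfv_SIG) imageE mem_Collect_eq subsetI)
  moreover have "Phi n m ` XZ n m = BZ n m"
    unfolding XZ BZ image_image borel_pair_image[OF n, symmetric] using Phi_clsX[OF n m] by auto
  ultimately show ?thesis unfolding bij_betw_def ..
qed

lemma Bc_eq_image:
  assumes n: "0 < n" and a: "(s, i, j) \<in> Delta_iso n m"
  shows "Bc n m (s, i, j) = borel_of n m ` Xc n m (s, i, j)"
proof -
  have i: "1 \<le> i" "i \<le> n" and j: "1 \<le> j" "j \<le> m" using a by (auto simp: mem_Delta_iso_iff)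
  have Bc: "Bc n m (s, i, j) = borel ` {\<sigma> \<in> shuffle_set n m. zeta n \<sigma> \<in> Xc n m (s, i, j)}"
    using zeta_in_Xc_True_iff[OF _ i j] zeta_in_Xc_False_iff[OF _ i j] by (cases s) auto
  have "{\<sigma> \<in> shuffle_set n m. zeta n \<sigma> \<in> Xc n m (s, i, j)} = shuffle_of n m ` Xc n m (s, i, j)"
  proof (intro set_eqI iffI)
    fix \<sigma> assume "\<sigma> \<in> {\<sigma> \<in> shuffle_set n m. zeta n \<sigma> \<in> Xc n m (s, i, j)}"
    then show "\<sigma> \<in> shuffle_of n m ` Xc n m (s, i, j)" using shuffle_of_zeta[OF n] by force
  next
    fix \<sigma> assume "\<sigma> \<in> shuffle_of n m ` Xc n m (s, i, j)"
    then show "\<sigma> \<in> {\<sigma> \<in> shuffle_set n m. zeta n \<sigma> \<in> Xc n m (s, i, j)}"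
      using shuffle_of_in_shuffle_set[OF n] zeta_shuffle_of[OF n] Xc_in_Xset by auto
  qed
  then show ?thesis unfolding Bc borel_of_def by (simp add: image_image)
qed

lemma Bobj_eq_image:
  assumes n: "0 < n" and m: "0 < m" and a: "\<alpha> \<in> Delta_iso n m"
  shows "Bobj n m \<alpha> = Phi n m ` Fobj n m \<alpha>"
proof -
  have Bc: "Bc n m (nu_pow n j \<alpha>) = borel_of n m ` Xc n m (nu_pow n j \<alpha>)" for j
    using nu_pow_in_Delta_iso[OF n a, of j] Bc_eq_image[OF n] by (metis prod_cases3)
  have Phi: "Phi n m (clsX n m (lam, j)) = clsB n m (borel_of n m lam, j)"
    if "lam \<in> Xc n m (nu_pow n j \<alpha>)" for lam j
    using Phi_clsX[OF n m, of "(lam, j)"] Xc_in_Xset[OF that] by simp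
  have "Bobj n m \<alpha> = {clsB n m (borel_of n m lam, j) | lam j. lam \<in> Xc n m (nu_pow n j \<alpha>)}"
    unfolding Bobj_def Bc by blast
  also have "\<dots> = Phi n m ` Fobj n m \<alpha>"
    unfolding Fobj_def using Phi by (auto simp: image_iff) metis
  finally show ?thesis .
qed

lemma transport_Fmor_clsB:
  assumes n: "0 < n" and m: "0 < m" and a: "\<alpha> \<in> Delta_iso n m" and b: "b \<in> Bc n m (nu_pow n j \<alpha>)"
  shows "transport_mor (Phi n m) (XZ n m) (Fmor n m) \<alpha> (clsB n m (b, j)) =
    clsB n m (r_op n m (nu_pow n j \<alpha>) b, j)"
proof -
  obtain s i jj where nj: "nu_pow n j \<alpha> = (s, i, jj)" by (cases "nu_pow n j \<alpha>")
  have a': "(s, i, jj) \<in> Delta_iso n m" using nu_pow_in_Delta_iso[OF n a, of j] nj by simp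
  then have r: "1 \<le> i" "i \<le> n" "1 \<le> jj" "jj \<le> m" by (auto simp: mem_Delta_iso_iff)
  obtain lam where l: "lam \<in> Xc n m (s, i, jj)" and bl: "b = borel_of n m lam"
    using b Bc_eq_image[OF n a'] nj by auto
  let ?\<sigma> = "shuffle_of n m lam"
  have S: "?\<sigma> \<in> shuffle_set n m" using shuffle_of_in_shuffle_set[OF n Xc_in_Xset[OF l]] .
  have z: "zeta n ?\<sigma> = lam" using zeta_shuffle_of[OF n Xc_in_Xset[OF l]] .
  have sw: "swap_ij i jj ?\<sigma> \<in> shuffle_set n m" "zeta n (swap_ij i jj ?\<sigma>) = t_op n (s, i, jj) lam"
    using zeta_swap_ij[OF S r, of s] z l by auto
  have lA: "(lam, j) \<in> XZ_base n m" using Xc_in_Xset[OF l] by simp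
  have tA: "(t_op n (s, i, jj) lam, j) \<in> XZ_base n m" using zeta_in_Xset[OF sw(1)] sw(2) by simp
  have "transport_mor (Phi n m) (XZ n m) (Fmor n m) \<alpha> (clsB n m (b, j))
      = Phi n m (Fmor n m \<alpha> (clsX n m (lam, j)))"
    using transport_mor_apply[OF bij_betw_imp_inj_on[OF bij_betw_Phi[OF n m]] clsX_in_XZ[OF lA]]
      Phi_clsX[OF n m lA] bl by simp
  also have "\<dots> = clsB n m (borel_of n m (t_op n (s, i, jj) lam), j)"
    using Fmor_clsX[OF n m a] l nj Phi_clsX[OF n m tA] by simp
  also have "borel_of n m (t_op n (s, i, jj) lam) = r_op n m (nu_pow n j \<alpha>) b"
    using sw borel_of_zeta[OF n sw(1)] r_op_borel[OF S] nj bl by (simp add: borel_of_def)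
  finally show ?thesis .
qed

theorem corollary3p7:
  fixes n m :: nat
  assumes "0 < n" and "n < m"
  shows "\<exists>Fm Bm.
    \<comment> \<open>(a)\<close>
    Tiso_functor (Delta_iso n m) (XZ n m) (Fobj n m) Fm \<and>
    (\<forall>\<alpha>\<in>Delta_iso n m. \<forall>lam j. lam \<in> Xc n m (nu_pow n j \<alpha>) \<longrightarrow>
        Fm \<alpha> (clsX n m (lam, j)) = clsX n m (t_op n (nu_pow n j \<alpha>) lam, j)) \<and>
    \<comment> \<open>(b)\<close>
    Tiso_functor (Delta_iso n m) (BZ n m) (Bobj n m) Bm \<and>
    (\<forall>\<alpha>\<in>Delta_iso n m. \<forall>b j. b \<in> Bc n m (nu_pow n j \<alpha>) \<longrightarrow>
        Bm \<alpha> (clsB n m (b, j)) = clsB n m (r_op n m (nu_pow n j \<alpha>) b, j)) \<and>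
    \<comment> \<open>(c)\<close>
    (\<exists>\<Phi>. (\<forall>\<sigma>\<in>shuffle_set n m. \<forall>k. \<Phi> (clsX n m (zeta n \<sigma>, k)) = clsB n m (borel \<sigma>, k)) \<and>
        bij_betw \<Phi> (XZ n m) (BZ n m) \<and>
        (\<forall>\<alpha>\<in>Delta_iso n m. \<Phi> ` Fobj n m \<alpha> = Bobj n m \<alpha> \<and>
           (\<forall>c\<in>Fobj n m \<alpha>. \<Phi> (Fm \<alpha> c) = Bm \<alpha> (\<Phi> c))))"
proof -
  have n: "0 < n" and m: "0 < m" using assms by simp_all
  let ?\<Phi> = "Phi n m" and ?Fm = "Fmor n m"
  let ?Bm = "transport_mor ?\<Phi> (XZ n m) ?Fm"
  have F: "Tiso_functor (Delta_iso n m) (XZ n m) (Fobj n m) ?Fm" by (rule Tiso_functor_Fmor[OF n m])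
  have \<Phi>: "bij_betw ?\<Phi> (XZ n m) (BZ n m)" by (rule bij_betw_Phi[OF n m])
  have B: "Tiso_functor (Delta_iso n m) (BZ n m) (Bobj n m) ?Bm"
    using Tiso_functor_transport[OF F _ bij_betw_imp_inj_on[OF \<Phi>]] \<Phi> neg_root_in_Delta_iso
      Bobj_eq_image[OF n m] by (simp add: bij_betw_def)
  have "?\<Phi> (clsX n m (zeta n \<sigma>, k)) = clsB n m (borel \<sigma>, k)" if "\<sigma> \<in> shuffle_set n m" for \<sigma> k
    using Phi_clsX[OF n m] zeta_in_Xset[OF that] borel_of_zeta[OF n that] by simp
  moreover have "?\<Phi> (?Fm \<alpha> c) = ?Bm \<alpha> (?\<Phi> c)" if "c \<in> Fobj n m \<alpha>" for \<alpha> c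
    using transport_mor_apply[OF bij_betw_imp_inj_on[OF \<Phi>]] that Fobj_subset_XZ by blast
  ultimately show ?thesis
    using F B \<Phi> Fmor_clsX[OF n m] transport_Fmor_clsB[OF n m] Bobj_eq_image[OF n m] by metis
qed

end
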